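(* Let $\alpha\le2$ and let $\{\mu_t\}_{t\in[0,T]}$ be the limit family from the definition of approximative solutions below. Then $\{\mu_t\}$ is steadily flowing: there is a full-measure set $A\subset[0,T]$ such that for every $t_0\in A$ and every $0\le\phi\in C_c^\infty(\mathbb{R}^d)$, the family of finite Radon measures $\rho_{t_0,t}[\phi](B):=\int_{B\times\mathbb{R}^d}\phi(v)\,d\big(T^{t_0,t}_\#\mu_t\big)(x,v)$ ($B\subset\mathbb{R}^d$ Borel), with $T^{t_0,t}(x,v)=(x-(t-t_0)v,v)$, is narrowly continuous at $t=t_0$ as a function of $t$ restricted to $A$; i.e. for every sequence $A\ni t_n\to t_0$ and every bounded continuous $\xi:\mathbb{R}^d\to\mathbb{R}$, $\int\xi\,d\rho_{t_0,t_n}[\phi]\to\int\xi\,d\rho_{t_0,t_0}[\phi]$.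
   Context: Setting: $T>0$, $\alpha\in[1,2]$, $d\ge1$, $\psi(s)=s^{-\alpha}$. $F_\#\mu$ is the pushforward $F_\#\mu(B)=\mu(F^{-1}(B))$. Particle system: $\dot x_i=v_i$, $\dot v_i=\frac1N\sum_{j\ne i}\psi(|x_i-x_j|)(v_j-v_i)$ (unique smooth non-collisional global solutions for distinct initial positions). Atomic solution: $\mu^N_t=\frac1N\sum_i\delta_{x_i^N(t)}\otimes\delta_{v_i^N(t)}$, $\mu^N=\mu^N_t\otimes\lambda^1(t)$, where $\mu=\mu_t\otimes\lambda^1(t)$ means $\int g\,d\mu=\int_0^T\int g(t,\cdot)d\mu_t\,dt$. $E[\mu_t]=\int|v|^2d\mu_t$. Approximative solutions: given compactly supported $\rho_0\in\mathcal{P}(\mathbb{R}^d)$ and $u_0\in L^\infty(\rho_0;\mathbb{R}^d)$, for each $N$ take initial data $(x_{i0}^N,v_{i0}^N)_{i=1}^N$ with pairwise distinct $x_{i0}^N$ such that $\frac1N\sum_i\delta_{x_{i0}^N}\rightharpoonup\rho_0$ and $\frac1N\sum_iv_{i0}^N\delta_{x_{i0}^N}\rightharpoonup u_0\rho_0$ narrowly, with all $\mu^N_t$ supported in $(T+1)B(M)\times B(M)$ for a fixed $M$; let $\mu^N$ be the associated atomic solutions, and pass to a subsequence (not relabeled) such that: $\mu^N\rightharpoonup\mu=\mu_t\otimes\lambda^1(t)$ narrowly; $[\mu^N_t\otimes\mu^N_t]\otimes\lambda^1(t)\rightharpoonup[\mu_t\otimes\mu_t]\otimes\lambda^1(t)$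 narrowly; $\rho^N_t:=\int_{\mathbb{R}^d_v}d\mu^N_t\to\rho_t$ in $C([0,T];(\mathcal{M}_+(\mathbb{R}^d),d_{BL}))$; and $E[\mu^N_t]\to E[\mu_t]$ for all $t$ in a full-measure set $A_E$. $B(r)$ is the open ball of radius $r$ at $0$, $d_{BL}$ the bounded-Lipschitz distance, narrow convergence = convergence against bounded continuous functions. *)

theory Defs
  imports "HOL-Probability.Probability"
begin

definition psi :: "real \<Rightarrow> real \<Rightarrow> real" where
  "psi \<alpha> s = s powr (-\<alpha>)"

definition particle_solution ::
  "real \<Rightarrow> real \<Rightarrow> nat \<Rightarrow> (nat \<Rightarrow> real \<Rightarrow> 'a::euclidean_space) \<Rightarrow> (nat \<Rightarrow> real \<Rightarrow> 'a) \<Rightarrow> bool" where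
  "particle_solution \<alpha> T N x v \<longleftrightarrow>
     (\<forall>i<N. \<forall>j<N. i \<noteq> j \<longrightarrow> (\<forall>t\<in>{0..T}. x i t \<noteq> x j t)) \<and>
     (\<forall>i<N. \<forall>t\<in>{0..T}.
        (x i has_vector_derivative v i t) (at t within {0..T}) \<and>
        (v i has_vector_derivative
           ((1 / real N) *\<^sub>R (\<Sum>j\<in>{..<N} - {i}. psi \<alpha> (norm (x i t - x j t)) *\<^sub>R (v j t - v i t))))
          (at t within {0..T}))"

definition bl_test :: "('a::metric_space \<Rightarrow> real) \<Rightarrow> bool" where
  "bl_test f \<longleftrightarrow> (\<forall>x. \<bar>f x\<bar> \<le> 1) \<and> (\<forall>x y. \<bar>f x - f y\<bar> \<le> dist x y)"

text \<open>C^infinity: all iterated partial derivatives (along basis directions) exist and are continuous.\<close>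
definition smooth_fun :: "('a::euclidean_space \<Rightarrow> real) \<Rightarrow> bool" where
  "smooth_fun f \<longleftrightarrow> (\<exists>D :: 'a list \<Rightarrow> 'a \<Rightarrow> real.
      D [] = f \<and>
      (\<forall>ds. continuous_on UNIV (D ds)) \<and>
      (\<forall>ds b y. b \<in> Basis \<longrightarrow>
          ((\<lambda>s. D ds (y + s *\<^sub>R b)) has_real_derivative D (b # ds) y) (at 0)))"

definition test_function :: "('a::euclidean_space \<Rightarrow> real) \<Rightarrow> bool" where
  "test_function \<phi> \<longleftrightarrow> smooth_fun \<phi> \<and> compact (closure {y. \<phi> y \<noteq> 0})"

definition transport :: "real \<Rightarrow> real \<Rightarrow> 'a::euclidean_space \<times> 'a \<Rightarrow> 'a \<times> 'a" where
  "transport t0 t z = (fst z - (t - t0) *\<^sub>R snd z, snd z)"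

text \<open>rho_{t0,t}[phi](B) = integral over B x R^d of phi(v) d(T^{t0,t}_# mu_t)(x,v).\<close>
definition rho_phi :: "(real \<Rightarrow> ('a::euclidean_space \<times> 'a) measure) \<Rightarrow> real \<Rightarrow> real \<Rightarrow> ('a \<Rightarrow> real) \<Rightarrow> 'a measure" where
  "rho_phi \<mu> t0 t \<phi> =
     distr (density (distr (\<mu> t) borel (transport t0 t)) (\<lambda>z. ennreal (\<phi> (snd z)))) borel fst"

definition steadily_flowing :: "real \<Rightarrow> (real \<Rightarrow> ('a::euclidean_space \<times> 'a) measure) \<Rightarrow> bool" where
  "steadily_flowing T \<mu> \<longleftrightarrow>
     (\<exists>A. A \<subseteq> {0..T} \<and> {0..T} - A \<in> null_sets lborel \<and>
        (\<forall>t0\<in>A. \<forall>\<phi>. test_function \<phi> \<and> (\<forall>y. 0 \<le> \<phi> y) \<longrightarrow>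
           (\<forall>ts. (\<forall>n. ts n \<in> A) \<and> ts \<longlonglongrightarrow> t0 \<longrightarrow>
              (\<forall>\<xi> :: 'a \<Rightarrow> real. continuous_on UNIV \<xi> \<and> bounded (range \<xi>) \<longrightarrow>
                 (\<lambda>n. \<integral>y. \<xi> y \<partial>rho_phi \<mu> t0 (ts n) \<phi>) \<longlonglongrightarrow> (\<integral>y. \<xi> y \<partial>rho_phi \<mu> t0 t0 \<phi>)))))"

end

theory Submission
  imports Defs
begin

text \<open>
  Test the particle systems against the observables \<open>cos (w \<bullet> (x, v) + p)\<close>. Along the dynamics, the
  empirical average of such an observable changes on \<open>[s, t]\<close> by at most \<open>C\<^sub>0 (t - s) + C\<^sub>1 (E s - E t)\<close>,
  where the kinetic energy \<open>E\<close> is nonincreasing; the interaction term is controlled by the energy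
  dissipation because \<open>\<psi>(r) r\<^sup>2 \<le> 1 + r\<close> for \<open>\<alpha> \<le> 2\<close>. The limit energy is monotone, hence continuous
  at almost every time, and there the empirical averages converge; by the weak convergence in time the
  limits are the moments of \<open>\<mu>\<^sub>t\<close> for almost every \<open>t\<close>. Through a countable dense set of frequencies
  this yields a full-measure set of times along which \<open>t \<mapsto> \<integral> cos (w \<bullet> T\<^bsup>t0,t\<^esup> z + p) d\<mu>\<^sub>t\<close> is continuous,
  since all \<open>\<mu>\<^sub>t\<close> live on a common compact set on which \<open>T\<^bsup>t0,t\<^esup>\<close> is close to the identity.
  Stone-Weierstrass extends this to every continuous observable, in particular to \<open>\<phi>(v) \<xi>(x)\<close>.
\<close>

section \<open>Estimates for the particle system\<close>

lemma abs_sin_diff_le: "\<bar>sin a - sin b\<bar> \<le> \<bar>a - b\<bar>" for a b :: real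
proof -
  have "\<bar>sin a - sin b\<bar> = 2 * \<bar>sin ((a - b) / 2)\<bar> * \<bar>cos ((a + b) / 2)\<bar>"
    by (simp add: sin_diff_sin abs_mult)
  also have "\<dots> \<le> 2 * \<bar>(a - b) / 2\<bar> * 1"
    by (intro mult_mono abs_sin_x_le_abs_x) auto
  finally show ?thesis by simp
qed

lemma abs_cos_diff_le: "\<bar>cos a - cos b\<bar> \<le> \<bar>a - b\<bar>" for a b :: real
  using abs_sin_diff_le[of "a + pi / 2" "b + pi / 2"] by (simp add: sin_add)

lemma psi_nonneg: "0 \<le> psi \<alpha> r"
  by (simp add: psi_def)

lemma psi_mult_square_le:
  assumes "0 \<le> r" "1 \<le> \<alpha>" "\<alpha> \<le> 2"
  shows "psi \<alpha> r * r\<^sup>2 \<le> 1 + r"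
proof (cases "r = 0")
  case True
  then show ?thesis by (simp add: psi_def)
next
  case False
  then have eq: "psi \<alpha> r * r\<^sup>2 = r powr (2 - \<alpha>)"
    using assms by (simp add: psi_def powr_diff powr_minus divide_simps powr_realpow)
  show ?thesis
  proof (cases "r \<le> 1")
    case True
    then have "r powr (2 - \<alpha>) \<le> 1"
      using assms by (intro powr_le1) auto
    then show ?thesis using eq assms by simp
  next
    case False
    then have "r powr (2 - \<alpha>) \<le> r powr 1"
      using assms by (intro powr_mono) auto
    then show ?thesis using eq False by simp
  qed
qed

lemma sum_sum_symmetrize:
  fixes G W :: "nat \<Rightarrow> 'a::real_inner" and \<psi> :: "nat \<Rightarrow> nat \<Rightarrow> real"
  assumes sym: "\<And>i j. \<psi> i j = \<psi> j i"
  shows "(\<Sum>i<N. \<Sum>j<N. \<psi> i j * (G i \<bullet> (W j - W i))) =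
         (\<Sum>i<N. \<Sum>j<N. \<psi> i j * ((G i - G j) \<bullet> (W j - W i))) / 2"
proof -
  have "(\<Sum>i<N. \<Sum>j<N. \<psi> i j * (G j \<bullet> (W j - W i))) = (\<Sum>j<N. \<Sum>i<N. \<psi> i j * (G j \<bullet> (W j - W i)))"
    by (rule sum.swap)
  also have "\<dots> = - (\<Sum>i<N. \<Sum>j<N. \<psi> i j * (G i \<bullet> (W j - W i)))"
    by (simp add: sum_negf[symmetric] sym algebra_simps)
  finally have swap: "(\<Sum>i<N. \<Sum>j<N. \<psi> i j * (G j \<bullet> (W j - W i))) =
      - (\<Sum>i<N. \<Sum>j<N. \<psi> i j * (G i \<bullet> (W j - W i)))" .
  have "(\<Sum>i<N. \<Sum>j<N. \<psi> i j * ((G i - G j) \<bullet> (W j - W i))) =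
     (\<Sum>i<N. \<Sum>j<N. \<psi> i j * (G i \<bullet> (W j - W i))) - (\<Sum>i<N. \<Sum>j<N. \<psi> i j * (G j \<bullet> (W j - W i)))"
    by (simp add: sum_subtractf[symmetric] algebra_simps)
  with swap show ?thesis by simp
qed

definition cs_force :: "real \<Rightarrow> nat \<Rightarrow> (nat \<Rightarrow> 'a::real_normed_vector) \<Rightarrow> (nat \<Rightarrow> 'a) \<Rightarrow> nat \<Rightarrow> 'a" where
  "cs_force \<alpha> N X V i = (1 / real N) *\<^sub>R (\<Sum>j\<in>{..<N} - {i}. psi \<alpha> (norm (X i - X j)) *\<^sub>R (V j - V i))"

definition cs_dissipation :: "real \<Rightarrow> nat \<Rightarrow> (nat \<Rightarrow> 'a::real_normed_vector) \<Rightarrow> (nat \<Rightarrow> 'a) \<Rightarrow> real" where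
  "cs_dissipation \<alpha> N X V =
     (\<Sum>i<N. \<Sum>j<N. psi \<alpha> (norm (X i - X j)) * (norm (V i - V j))\<^sup>2) / (real N)\<^sup>2"

lemma cs_force_eq_sum_all:
  "cs_force \<alpha> N X V i = (1 / real N) *\<^sub>R (\<Sum>j<N. psi \<alpha> (norm (X i - X j)) *\<^sub>R (V j - V i))"
proof -
  have "(\<Sum>j\<in>{..<N} - {i}. psi \<alpha> (norm (X i - X j)) *\<^sub>R (V j - V i)) =
      (\<Sum>j<N. psi \<alpha> (norm (X i - X j)) *\<^sub>R (V j - V i))"
    by (rule sum.mono_neutral_left) auto
  then show ?thesis by (simp add: cs_force_def)
qed

lemma cs_dissipation_nonneg: "0 \<le> cs_dissipation \<alpha> N X V"
  unfolding cs_dissipation_def by (intro divide_nonneg_nonneg sum_nonneg mult_nonneg_nonneg psi_nonneg) auto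

lemma cs_energy_identity:
  fixes X V :: "nat \<Rightarrow> 'a::real_inner"
  assumes "N > 0"
  shows "(\<Sum>i<N. 2 * (V i \<bullet> cs_force \<alpha> N X V i)) / real N = - cs_dissipation \<alpha> N X V"
proof -
  define \<psi> where "\<psi> i j = psi \<alpha> (norm (X i - X j))" for i j
  have sym: "\<psi> i j = \<psi> j i" for i j by (simp add: \<psi>_def norm_minus_commute)
  have sq: "(V i - V j) \<bullet> (V j - V i) = - (norm (V i - V j))\<^sup>2" for i j
    by (simp add: power2_norm_eq_inner inner_diff_left inner_diff_right inner_commute)
  have "(\<Sum>i<N. 2 * (V i \<bullet> cs_force \<alpha> N X V i)) =
      (2 / real N) * (\<Sum>i<N. \<Sum>j<N. \<psi> i j * (V i \<bullet> (V j - V i)))"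
    by (simp add: cs_force_eq_sum_all \<psi>_def inner_sum_right sum_distrib_left algebra_simps)
  also have "\<dots> = - (1 / real N) * (\<Sum>i<N. \<Sum>j<N. \<psi> i j * (norm (V i - V j))\<^sup>2)"
    by (simp add: sum_sum_symmetrize[OF sym] sq sum_negf)
  finally show ?thesis
    using assms by (simp add: cs_dissipation_def \<psi>_def power2_eq_square)
qed

lemma alignment_pair_term_le:
  fixes k l Xi Xj Vi Vj :: "'a::real_inner"
  assumes psi: "0 \<le> \<psi>" "\<psi> * (norm (Xi - Xj))\<^sup>2 \<le> B"
  shows "\<bar>\<psi> * ((sin (k \<bullet> Xj + l \<bullet> Vj + p) - sin (k \<bullet> Xi + l \<bullet> Vi + p)) * (l \<bullet> (Vj - Vi)))\<bar>
     \<le> norm l * norm k * B / 2 + (norm l * norm k / 2 + (norm l)\<^sup>2) * (\<psi> * (norm (Vi - Vj))\<^sup>2)"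
proof -
  define r where "r = norm (Xi - Xj)"
  define d where "d = norm (Vi - Vj)"
  have angle: "\<bar>(k \<bullet> Xj + l \<bullet> Vj + p) - (k \<bullet> Xi + l \<bullet> Vi + p)\<bar> \<le> norm k * r + norm l * d"
  proof -
    have "\<bar>(k \<bullet> Xj + l \<bullet> Vj + p) - (k \<bullet> Xi + l \<bullet> Vi + p)\<bar> \<le> \<bar>k \<bullet> (Xj - Xi)\<bar> + \<bar>l \<bullet> (Vj - Vi)\<bar>"
      by (simp add: inner_diff_right)
    also have "\<dots> \<le> norm k * norm (Xj - Xi) + norm l * norm (Vj - Vi)"
      by (intro add_mono Cauchy_Schwarz_ineq2)
    finally show ?thesis by (simp add: r_def d_def norm_minus_commute)
  qed
  have vel: "\<bar>l \<bullet> (Vj - Vi)\<bar> \<le> norm l * d"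
    using Cauchy_Schwarz_ineq2[of l "Vj - Vi"] by (simp add: d_def norm_minus_commute)
  \<comment> \<open>AM-GM splits the cross term into the assumed bound on \<open>\<psi> r\<^sup>2\<close> and the dissipation \<open>\<psi> d\<^sup>2\<close>.\<close>
  have cross: "\<psi> * r * d \<le> (B + \<psi> * d\<^sup>2) / 2"
  proof -
    have "0 \<le> \<psi> * (r - d)\<^sup>2" using psi by simp
    then have "\<psi> * r * d \<le> (\<psi> * r\<^sup>2 + \<psi> * d\<^sup>2) / 2" by (simp add: algebra_simps power2_eq_square)
    then show ?thesis using psi by (simp add: r_def)
  qed
  have "\<bar>\<psi> * ((sin (k \<bullet> Xj + l \<bullet> Vj + p) - sin (k \<bullet> Xi + l \<bullet> Vi + p)) * (l \<bullet> (Vj - Vi)))\<bar>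
      \<le> \<psi> * ((norm k * r + norm l * d) * (norm l * d))"
    using psi angle vel abs_sin_diff_le[of "k \<bullet> Xj + l \<bullet> Vj + p" "k \<bullet> Xi + l \<bullet> Vi + p"]
    by (simp add: abs_mult) (intro mult_left_mono mult_mono order_trans[OF _ angle], auto)
  also have "\<dots> = norm l * norm k * (\<psi> * r * d) + (norm l)\<^sup>2 * (\<psi> * d\<^sup>2)"
    by (simp add: algebra_simps power2_eq_square)
  also have "\<dots> \<le> norm l * norm k * ((B + \<psi> * d\<^sup>2) / 2) + (norm l)\<^sup>2 * (\<psi> * d\<^sup>2)"
    using cross by (intro add_right_mono mult_left_mono) auto
  finally show ?thesis by (simp add: d_def field_simps)
qed

lemma sum_sin_alignment_le:
  fixes X V :: "nat \<Rightarrow> 'a::real_inner" and k l :: 'a and p :: real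
  assumes N: "N > 0" and \<alpha>: "1 \<le> \<alpha>" "\<alpha> \<le> 2"
    and diam: "\<And>i j. i < N \<Longrightarrow> j < N \<Longrightarrow> norm (X i - X j) \<le> Rd"
  defines "\<theta> \<equiv> \<lambda>i. k \<bullet> X i + l \<bullet> V i + p"
  shows "\<bar>\<Sum>i<N. sin (\<theta> i) * (l \<bullet> cs_force \<alpha> N X V i)\<bar> / real N
    \<le> (norm l * norm k * (1 + Rd) / 2 + (norm l * norm k / 2 + (norm l)\<^sup>2) * cs_dissipation \<alpha> N X V) / 2"
proof -
  define \<psi> where "\<psi> i j = psi \<alpha> (norm (X i - X j))" for i j
  define c where "c = norm l * norm k * (1 + Rd) / 2"
  define c' where "c' = norm l * norm k / 2 + (norm l)\<^sup>2"
  define S where "S = (\<Sum>i<N. \<Sum>j<N. \<psi> i j * ((sin (\<theta> j) - sin (\<theta> i)) * (l \<bullet> (V j - V i))))"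
  have sym: "\<psi> i j = \<psi> j i" for i j by (simp add: \<psi>_def norm_minus_commute)
  have "(\<Sum>i<N. sin (\<theta> i) * (l \<bullet> cs_force \<alpha> N X V i)) =
      (1 / real N) * (\<Sum>i<N. \<Sum>j<N. \<psi> i j * ((sin (\<theta> i) *\<^sub>R l) \<bullet> (V j - V i)))"
    by (simp add: cs_force_eq_sum_all \<psi>_def inner_sum_right sum_distrib_left algebra_simps)
  also have "\<dots> = - S / (2 * real N)"
    by (subst sum_sum_symmetrize[OF sym]) (simp add: S_def algebra_simps sum_negf[symmetric])
  finally have sum_eq: "(\<Sum>i<N. sin (\<theta> i) * (l \<bullet> cs_force \<alpha> N X V i)) = - S / (2 * real N)" .
  have "\<bar>S\<bar> \<le> (\<Sum>i<N. \<Sum>j<N. c + c' * (\<psi> i j * (norm (V i - V j))\<^sup>2))"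
    unfolding S_def
  proof (rule order_trans[OF sum_abs], intro sum_mono order_trans[OF sum_abs])
    fix i j assume "i \<in> {..<N}" "j \<in> {..<N}"
    have "0 \<le> \<psi> i j" by (simp add: \<psi>_def psi_nonneg)
    moreover have "\<psi> i j * (norm (X i - X j))\<^sup>2 \<le> 1 + Rd"
      using psi_mult_square_le[OF _ \<alpha>, of "norm (X i - X j)"] diam[of i j] \<open>i \<in> {..<N}\<close> \<open>j \<in> {..<N}\<close>
      by (simp add: \<psi>_def)
    ultimately have "\<bar>\<psi> i j * ((sin (\<theta> j) - sin (\<theta> i)) * (l \<bullet> (V j - V i)))\<bar>
        \<le> norm l * norm k * (1 + Rd) / 2 + c' * (\<psi> i j * (norm (V i - V j))\<^sup>2)"
      unfolding \<theta>_def c'_def by (rule alignment_pair_term_le)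
    then show "\<bar>\<psi> i j * ((sin (\<theta> j) - sin (\<theta> i)) * (l \<bullet> (V j - V i)))\<bar>
        \<le> c + c' * (\<psi> i j * (norm (V i - V j))\<^sup>2)"
      by (simp add: c_def)
  qed
  also have "\<dots> = (real N)\<^sup>2 * c + c' * (\<Sum>i<N. \<Sum>j<N. \<psi> i j * (norm (V i - V j))\<^sup>2)"
    by (simp add: sum.distrib sum_distrib_left power2_eq_square)
  also have "\<dots> = (real N)\<^sup>2 * (c + c' * cs_dissipation \<alpha> N X V)"
    using N by (simp add: cs_dissipation_def \<psi>_def algebra_simps)
  finally have "\<bar>S\<bar> \<le> (real N)\<^sup>2 * (c + c' * cs_dissipation \<alpha> N X V)" .
  then show ?thesis
    using N unfolding sum_eq c_def[symmetric] c'_def[symmetric]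
    by (simp add: abs_div abs_mult divide_simps power2_eq_square mult_ac)
qed

definition cos_rate_const :: "real \<Rightarrow> real \<Rightarrow> 'a::real_normed_vector \<times> 'a \<Rightarrow> real" where
  "cos_rate_const M Rd w = norm (fst w) * M + norm (snd w) * norm (fst w) * (1 + Rd) / 4"

definition cos_energy_const :: "'a::real_normed_vector \<times> 'a \<Rightarrow> real" where
  "cos_energy_const w = norm (snd w) * (norm (fst w) / 2 + norm (snd w)) / 2"

lemma cos_energy_const_nonneg: "0 \<le> cos_energy_const w"
  by (simp add: cos_energy_const_def)

lemma cos_rate_const_nonneg: "0 \<le> M \<Longrightarrow> 0 \<le> Rd \<Longrightarrow> 0 \<le> cos_rate_const M Rd w"
  by (simp add: cos_rate_const_def)

lemma cos_observable_rate_le: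
  fixes X V :: "nat \<Rightarrow> 'a::real_inner" and w :: "'a \<times> 'a" and p :: real
  assumes N: "N > 0" and \<alpha>: "1 \<le> \<alpha>" "\<alpha> \<le> 2"
    and speed: "\<And>i. i < N \<Longrightarrow> norm (V i) \<le> M"
    and diam: "\<And>i j. i < N \<Longrightarrow> j < N \<Longrightarrow> norm (X i - X j) \<le> Rd"
  shows "\<bar>(\<Sum>i<N. - sin (w \<bullet> (X i, V i) + p) * (w \<bullet> (V i, cs_force \<alpha> N X V i))) / real N\<bar>
    \<le> cos_rate_const M Rd w + cos_energy_const w * cs_dissipation \<alpha> N X V"
proof -
  obtain k l where w: "w = (k, l)" by (cases w)
  define \<theta> where "\<theta> i = k \<bullet> X i + l \<bullet> V i + p" for i
  have free: "\<bar>\<Sum>i<N. sin (\<theta> i) * (k \<bullet> V i)\<bar> \<le> real N * (norm k * M)"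
  proof -
    have "\<bar>\<Sum>i<N. sin (\<theta> i) * (k \<bullet> V i)\<bar> \<le> (\<Sum>i<N. norm k * M)"
    proof (rule order_trans[OF sum_abs], rule sum_mono)
      fix i assume "i \<in> {..<N}"
      then have kV: "\<bar>k \<bullet> V i\<bar> \<le> norm k * M"
        using Cauchy_Schwarz_ineq2[of k "V i"] speed[of i] by (meson lessThan_iff mult_left_mono norm_ge_zero order_trans)
      then show "\<bar>sin (\<theta> i) * (k \<bullet> V i)\<bar> \<le> norm k * M"
        using mult_mono[OF abs_sin_le_one kV] by (simp add: abs_mult)
    qed
    then show ?thesis by simp
  qed
  have "\<bar>(\<Sum>i<N. - sin (\<theta> i) * (k \<bullet> V i + l \<bullet> cs_force \<alpha> N X V i)) / real N\<bar>
      \<le> \<bar>\<Sum>i<N. sin (\<theta> i) * (k \<bullet> V i)\<bar> / real N + \<bar>\<Sum>i<N. sin (\<theta> i) * (l \<bullet> cs_force \<alpha> N X V i)\<bar> / real N"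
  proof -
    have "(\<Sum>i<N. - sin (\<theta> i) * (k \<bullet> V i + l \<bullet> cs_force \<alpha> N X V i)) =
        - ((\<Sum>i<N. sin (\<theta> i) * (k \<bullet> V i)) + (\<Sum>i<N. sin (\<theta> i) * (l \<bullet> cs_force \<alpha> N X V i)))"
      by (simp add: sum.distrib[symmetric] sum_negf[symmetric] algebra_simps)
    then show ?thesis
      using N by (simp add: add_divide_distrib[symmetric] abs_triangle_ineq divide_right_mono)
  qed
  also have "\<dots> \<le> norm k * M
      + (norm l * norm k * (1 + Rd) / 2 + (norm l * norm k / 2 + (norm l)\<^sup>2) * cs_dissipation \<alpha> N X V) / 2"
    using free N sum_sin_alignment_le[OF N \<alpha> diam, where k=k and l=l and p=p]
    by (intro add_mono) (simp_all add: \<theta>_def divide_simps mult_ac)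
  finally show ?thesis
    by (simp add: w \<theta>_def cos_rate_const_def cos_energy_const_def field_simps power2_eq_square)
qed

lemma antimono_on_Icc_if_derivative_nonpos:
  fixes u u' :: "real \<Rightarrow> real"
  assumes deriv: "\<And>t. t \<in> {a..b} \<Longrightarrow> (u has_real_derivative u' t) (at t within {a..b})"
    and nonpos: "\<And>t. t \<in> {a..b} \<Longrightarrow> u' t \<le> 0"
    and st: "a \<le> s" "s \<le> t" "t \<le> b"
  shows "u t \<le> u s"
proof (rule DERIV_nonpos_imp_decreasing_open[OF st(2)])
  fix y assume y: "s < y" "y < t"
  then have "at y within {a..b} = at y" using st by (intro at_within_Icc_at) auto
  then show "\<exists>z. (u has_real_derivative z) (at y) \<and> z \<le> 0"
    using deriv[of y] nonpos[of y] y st by auto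
next
  have "continuous_on {a..b} u"
    using deriv by (meson DERIV_continuous continuous_on_eq_continuous_within)
  then show "continuous_on {s..t} u" by (rule continuous_on_subset) (use st in auto)
qed

lemma has_real_derivative_cos_inner:
  fixes z :: "real \<Rightarrow> 'a::real_inner"
  assumes "(z has_vector_derivative z') (at t within S)"
  shows "((\<lambda>t. cos (w \<bullet> z t + p)) has_real_derivative (- sin (w \<bullet> z t + p) * (w \<bullet> z'))) (at t within S)"
proof -
  have "((\<lambda>t. w \<bullet> z t) has_vector_derivative w \<bullet> z') (at t within S)"
    using bounded_bilinear.has_vector_derivative[OF bounded_bilinear_inner has_vector_derivative_const assms, of w]
    by simp
  then have "((\<lambda>t. w \<bullet> z t + p) has_real_derivative w \<bullet> z') (at t within S)"
    unfolding has_real_derivative_iff_has_vector_derivative by (auto intro: derivative_eq_intros)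
  from DERIV_chain2[OF DERIV_cos this] show ?thesis by simp
qed

lemma has_real_derivative_norm_square:
  fixes z :: "real \<Rightarrow> 'a::real_inner"
  assumes "(z has_vector_derivative z') (at t within S)"
  shows "((\<lambda>t. (norm (z t))\<^sup>2) has_real_derivative 2 * (z t \<bullet> z')) (at t within S)"
  using bounded_bilinear.has_vector_derivative[OF bounded_bilinear_inner assms assms]
  unfolding has_real_derivative_iff_has_vector_derivative power2_norm_eq_inner
  by (simp add: inner_commute)

definition kinetic_energy :: "nat \<Rightarrow> (nat \<Rightarrow> 'a::real_normed_vector) \<Rightarrow> real" where
  "kinetic_energy N V = (\<Sum>i<N. (norm (V i))\<^sup>2) / real N"

definition cos_average :: "nat \<Rightarrow> 'a::real_inner \<times> 'a \<Rightarrow> real \<Rightarrow> (nat \<Rightarrow> 'a) \<Rightarrow> (nat \<Rightarrow> 'a) \<Rightarrow> real" where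
  "cos_average N w p X V = (\<Sum>i<N. cos (w \<bullet> (X i, V i) + p)) / real N"

lemma abs_cos_average_le_1: "N > 0 \<Longrightarrow> \<bar>cos_average N w p X V\<bar> \<le> 1"
proof -
  assume N: "N > 0"
  have "\<bar>\<Sum>i<N. cos (w \<bullet> (X i, V i) + p)\<bar> \<le> (\<Sum>i<N. 1)"
    by (rule order_trans[OF sum_abs sum_mono]) auto
  then show ?thesis using N by (simp add: cos_average_def abs_div divide_le_eq_1)
qed

context
  fixes \<alpha> T M Rx :: real and N :: nat and x v :: "nat \<Rightarrow> real \<Rightarrow> 'a::euclidean_space"
  assumes N: "N > 0" and \<alpha>: "1 \<le> \<alpha>" "\<alpha> \<le> 2" and sol: "particle_solution \<alpha> T N x v"
    and bounds: "\<And>i t. i < N \<Longrightarrow> t \<in> {0..T} \<Longrightarrow> norm (x i t) \<le> Rx \<and> norm (v i t) \<le> M"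
begin

lemma particle_has_derivatives:
  assumes "i < N" "t \<in> {0..T}"
  shows "((\<lambda>t. (x i t, v i t)) has_vector_derivative
      (v i t, cs_force \<alpha> N (\<lambda>j. x j t) (\<lambda>j. v j t) i)) (at t within {0..T})"
    and "(v i has_vector_derivative cs_force \<alpha> N (\<lambda>j. x j t) (\<lambda>j. v j t) i) (at t within {0..T})"
  using sol assms unfolding particle_solution_def cs_force_def
  by (auto intro!: has_vector_derivative_Pair)

lemma particle_kinetic_energy_has_derivative:
  assumes "t \<in> {0..T}"
  shows "((\<lambda>t. kinetic_energy N (\<lambda>i. v i t)) has_real_derivative
      - cs_dissipation \<alpha> N (\<lambda>i. x i t) (\<lambda>i. v i t)) (at t within {0..T})"
proof -
  have "((\<lambda>t. kinetic_energy N (\<lambda>i. v i t)) has_real_derivative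
      (\<Sum>i<N. 2 * (v i t \<bullet> cs_force \<alpha> N (\<lambda>j. x j t) (\<lambda>j. v j t) i)) / real N) (at t within {0..T})"
    unfolding kinetic_energy_def
    by (intro DERIV_cdivide DERIV_sum has_real_derivative_norm_square particle_has_derivatives(2)) (use assms in auto)
  then show ?thesis
    using cs_energy_identity[OF N, where V="\<lambda>i. v i t" and X="\<lambda>j. x j t" and \<alpha>=\<alpha>] by simp
qed

lemma particle_cos_average_has_derivative:
  assumes "t \<in> {0..T}"
  shows "((\<lambda>t. cos_average N w p (\<lambda>i. x i t) (\<lambda>i. v i t)) has_real_derivative
      (\<Sum>i<N. - sin (w \<bullet> (x i t, v i t) + p) * (w \<bullet> (v i t, cs_force \<alpha> N (\<lambda>j. x j t) (\<lambda>j. v j t) i)))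
        / real N) (at t within {0..T})"
  unfolding cos_average_def
  by (intro DERIV_cdivide DERIV_sum has_real_derivative_cos_inner particle_has_derivatives(1)) (use assms in auto)

lemma continuous_on_particle_cos_average:
  "continuous_on {0..T} (\<lambda>t. cos_average N w p (\<lambda>i. x i t) (\<lambda>i. v i t))"
  using particle_cos_average_has_derivative
  by (meson DERIV_continuous continuous_on_eq_continuous_within)

lemma particle_kinetic_energy_antimono:
  "0 \<le> s \<Longrightarrow> s \<le> t \<Longrightarrow> t \<le> T \<Longrightarrow> kinetic_energy N (\<lambda>i. v i t) \<le> kinetic_energy N (\<lambda>i. v i s)"
  by (rule antimono_on_Icc_if_derivative_nonpos[OF particle_kinetic_energy_has_derivative])
     (auto intro: cs_dissipation_nonneg)

lemma particle_cos_average_rate_le: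
  assumes "t \<in> {0..T}"
  shows "\<bar>(\<Sum>i<N. - sin (w \<bullet> (x i t, v i t) + p) * (w \<bullet> (v i t, cs_force \<alpha> N (\<lambda>j. x j t) (\<lambda>j. v j t) i)))
      / real N\<bar> \<le> cos_rate_const M (2 * Rx) w + cos_energy_const w * cs_dissipation \<alpha> N (\<lambda>i. x i t) (\<lambda>i. v i t)"
proof (rule cos_observable_rate_le[OF N \<alpha>])
  show "norm (v i t) \<le> M" if "i < N" for i using bounds[OF that assms] by simp
  show "norm (x i t - x j t) \<le> 2 * Rx" if "i < N" "j < N" for i j
    using norm_triangle_ineq4[of "x i t" "x j t"] bounds[OF that(1) assms] bounds[OF that(2) assms]
    by linarith
qed

lemma particle_cos_average_increment_le:
  assumes st: "0 \<le> s" "s \<le> t" "t \<le> T"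
  shows "\<bar>cos_average N w p (\<lambda>i. x i t) (\<lambda>i. v i t) - cos_average N w p (\<lambda>i. x i s) (\<lambda>i. v i s)\<bar>
    \<le> cos_rate_const M (2 * Rx) w * (t - s)
      + cos_energy_const w * (kinetic_energy N (\<lambda>i. v i s) - kinetic_energy N (\<lambda>i. v i t))"
proof -
  define f where "f t = cos_average N w p (\<lambda>i. x i t) (\<lambda>i. v i t)" for t
  define E where "E t = kinetic_energy N (\<lambda>i. v i t)" for t
  define D where "D t = cs_dissipation \<alpha> N (\<lambda>i. x i t) (\<lambda>i. v i t)" for t
  define f' where "f' t = (\<Sum>i<N. - sin (w \<bullet> (x i t, v i t) + p) *
      (w \<bullet> (v i t, cs_force \<alpha> N (\<lambda>j. x j t) (\<lambda>j. v j t) i))) / real N" for t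
  define C0 where "C0 = cos_rate_const M (2 * Rx) w"
  define C1 where "C1 = cos_energy_const w"
  have rate: "\<bar>f' u\<bar> \<le> C0 + C1 * D u" if "u \<in> {0..T}" for u
    using particle_cos_average_rate_le[OF that] by (simp add: f'_def C0_def C1_def D_def)
  \<comment> \<open>\<open>\<sigma> f - C0 t + C1 E\<close> is nonincreasing for both signs \<open>\<sigma>\<close>, because \<open>E' = - D\<close>.\<close>
  have "\<sigma> * (f t - f s) \<le> C0 * (t - s) + C1 * (E s - E t)" if "\<bar>\<sigma>\<bar> = 1" for \<sigma>
  proof -
    have "(\<lambda>t. \<sigma> * f t - C0 * t + C1 * E t) t \<le> (\<lambda>t. \<sigma> * f t - C0 * t + C1 * E t) s"
    proof (rule antimono_on_Icc_if_derivative_nonpos[OF _ _ st])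
      fix u assume u: "u \<in> {0..T}"
      show "((\<lambda>t. \<sigma> * f t - C0 * t + C1 * E t) has_real_derivative \<sigma> * f' u - C0 + C1 * (- D u))
          (at u within {0..T})"
        using DERIV_add[OF DERIV_diff[OF DERIV_cmult[OF particle_cos_average_has_derivative[OF u]]
            DERIV_cmult[OF DERIV_ident]] DERIV_cmult[OF particle_kinetic_energy_has_derivative[OF u]]]
        unfolding f_def E_def f'_def D_def by simp
      have "\<sigma> * f' u \<le> \<bar>f' u\<bar>" using abs_ge_self[of "\<sigma> * f' u"] that by (simp add: abs_mult)
      then show "\<sigma> * f' u - C0 + C1 * (- D u) \<le> 0" using rate[OF u] by simp
    qed
    then show ?thesis by (simp add: algebra_simps)
  qed
  from this[of 1] this[of "-1"] show ?thesis
    unfolding f_def E_def C0_def C1_def by (simp add: abs_le_iff)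
qed

end

lemma borel_measurable_restrict_Icc_if_continuous_on:
  fixes f :: "real \<Rightarrow> real"
  shows "continuous_on {a..b} f \<Longrightarrow> f \<in> borel_measurable (restrict_space lborel {a..b})"
  using borel_measurable_continuous_on_restrict[of "{a..b}" f]
  by (simp add: measurable_cong_sets[OF sets_restrict_space_cong[OF sets_lborel] refl])

lemma set_integrable_Icc_if_bounded:
  fixes f :: "real \<Rightarrow> real"
  assumes meas: "f \<in> borel_measurable (restrict_space lborel {a..b})"
    and bound: "\<And>t. t \<in> {a..b} \<Longrightarrow> \<bar>f t\<bar> \<le> B"
  shows "set_integrable lborel {a..b} f"
proof -
  have "(\<lambda>t. indicator {a..b} t *\<^sub>R f t) \<in> borel_measurable lborel"
    using meas by (subst (asm) borel_measurable_restrict_space_iff) auto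
  moreover have "integrable lborel (\<lambda>t. indicator {a..b} t * B)"
    by (intro integrable_mult_left integrable_real_indicator) (auto simp: emeasure_lborel_Icc_eq)
  moreover have "norm (indicator {a..b} t *\<^sub>R f t) \<le> norm (indicator {a..b} t * B)" for t
    using bound[of t] by (cases "t \<in> {a..b}") auto
  ultimately show ?thesis
    unfolding set_integrable_def by (blast intro: Bochner_Integration.integrable_bound[OF _ _ AE_I2])
qed

lemma ramp_tendsto_indicator_Ioi:
  "(\<lambda>j. min 1 (max 0 (real j * (u - x)))) \<longlonglongrightarrow> (indicator {x<..} u :: real)"
proof (cases "x < u")
  case True
  obtain j0 :: nat where j0: "1 / (u - x) < j0" using reals_Archimedean2 by blast
  have "1 \<le> real j * (u - x)" if "j \<ge> j0" for j
  proof -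
    have "1 < real j0 * (u - x)" using j0 True by (simp add: field_simps)
    also have "\<dots> \<le> real j * (u - x)" using that True by (intro mult_right_mono) auto
    finally show ?thesis by simp
  qed
  then have "\<forall>j\<ge>j0. min 1 (max 0 (real j * (u - x))) = indicator {x<..} u"
    using True by auto
  then show ?thesis by (intro tendsto_eventually) (auto simp: eventually_sequentially)
next
  case False
  then show ?thesis by (simp add: mult_nonneg_nonpos)
qed

lemma integral_indicator_Ioi_eq_0_if_orthogonal:
  fixes h :: "real \<Rightarrow> real"
  assumes h: "integrable lborel h"
    and orth: "\<And>g. continuous_on UNIV g \<Longrightarrow> bounded (range g) \<Longrightarrow> (\<integral>u. g u * h u \<partial>lborel) = 0"
  shows "(\<integral>u. indicator {x<..} u * h u \<partial>lborel) = 0"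
proof -
  define g where "g j u = min 1 (max 0 (real j * (u - x)))" for j :: nat and u
  have "(\<lambda>j. \<integral>u. g j u * h u \<partial>lborel) \<longlonglongrightarrow> (\<integral>u. indicator {x<..} u * h u \<partial>lborel)"
  proof (rule integral_dominated_convergence[where w="\<lambda>u. \<bar>h u\<bar>"])
    show "AE u in lborel. norm (g j u * h u) \<le> \<bar>h u\<bar>" for j
    proof (intro AE_I2)
      fix u
      have "\<bar>g j u\<bar> \<le> 1" by (simp add: g_def)
      then show "norm (g j u * h u) \<le> \<bar>h u\<bar>"
        using mult_right_mono[of "\<bar>g j u\<bar>" 1 "\<bar>h u\<bar>"] by (simp add: abs_mult)
    qed
    show "AE u in lborel. (\<lambda>j. g j u * h u) \<longlonglongrightarrow> indicator {x<..} u * h u"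
      unfolding g_def by (intro AE_I2 tendsto_mult ramp_tendsto_indicator_Ioi tendsto_const)
    show "integrable lborel (\<lambda>u. \<bar>h u\<bar>)" using h by simp
    show "(\<lambda>u. indicator {x<..} u * h u) \<in> borel_measurable lborel" using h by measurable
    show "(\<lambda>u. g j u * h u) \<in> borel_measurable lborel" for j using h unfolding g_def by measurable
  qed
  moreover have "(\<integral>u. g j u * h u \<partial>lborel) = 0" for j
  proof (rule orth)
    show "continuous_on UNIV (g j)" unfolding g_def by (intro continuous_intros)
    show "bounded (range (g j))" unfolding bounded_iff g_def by (intro exI[of _ 1]) auto
  qed
  ultimately show ?thesis by (simp add: LIMSEQ_const_iff)
qed

lemma emeasure_density_Ioi:
  fixes f :: "real \<Rightarrow> real"
  assumes f: "integrable lborel f" "\<And>u. 0 \<le> f u"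
  shows "emeasure (density lborel (\<lambda>u. ennreal (f u))) {x<..} = ennreal (\<integral>u. indicator {x<..} u * f u \<partial>lborel)"
proof -
  have "emeasure (density lborel (\<lambda>u. ennreal (f u))) {x<..} =
      (\<integral>\<^sup>+u. ennreal (indicator {x<..} u * f u) \<partial>lborel)"
    using f(1) by (subst emeasure_density) (auto intro!: nn_integral_cong simp: indicator_def)
  also have "\<dots> = ennreal (\<integral>u. indicator {x<..} u * f u \<partial>lborel)"
    using integrable_real_mult_indicator[of "{x<..}" lborel f] f
    by (intro nn_integral_eq_integral) (auto simp: mult.commute)
  finally show ?thesis .
qed

lemma AE_eq_0_if_integral_Ioi_eq_0:
  fixes h :: "real \<Rightarrow> real"
  assumes h: "integrable lborel h" and Ioi: "\<And>x. (\<integral>u. indicator {x<..} u * h u \<partial>lborel) = 0"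
  shows "AE u in lborel. h u = 0"
proof -
  define hp where "hp u = max 0 (h u)" for u
  define hn where "hn u = max 0 (- h u)" for u
  have int: "integrable lborel hp" "integrable lborel hn"
    using h unfolding hp_def hn_def by auto
  have Ioi_eq: "(\<integral>u. indicator {x<..} u * hp u \<partial>lborel) = (\<integral>u. indicator {x<..} u * hn u \<partial>lborel)" for x
  proof -
    have ind: "integrable lborel (\<lambda>u. indicator {x<..} u * f u)" if "integrable lborel f" for f :: "real \<Rightarrow> real"
      using integrable_real_mult_indicator[OF _ that, of "{x<..}"] by (simp add: mult.commute)
    have "(\<integral>u. indicator {x<..} u * hp u \<partial>lborel) - (\<integral>u. indicator {x<..} u * hn u \<partial>lborel)
        = (\<integral>u. indicator {x<..} u * hp u - indicator {x<..} u * hn u \<partial>lborel)"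
      using ind[OF int(1)] ind[OF int(2)] by simp
    also have "\<dots> = (\<integral>u. indicator {x<..} u * h u \<partial>lborel)"
      by (rule Bochner_Integration.integral_cong) (auto simp: hp_def hn_def max_def algebra_simps)
    finally show ?thesis using Ioi[of x] by simp
  qed
  have nonneg: "\<And>u. 0 \<le> hp u" "\<And>u. 0 \<le> hn u"
    by (simp_all add: hp_def hn_def)
  have dens: "density lborel (\<lambda>u. ennreal (hp u)) = density lborel (\<lambda>u. ennreal (hn u))"
  proof (rule measure_eqI_lessThan)
    show "emeasure (density lborel (\<lambda>u. ennreal (hp u))) {x<..} < \<infinity>" for x
      unfolding emeasure_density_Ioi[OF int(1) nonneg(1)] by simp
    show "emeasure (density lborel (\<lambda>u. ennreal (hp u))) {x<..} =
        emeasure (density lborel (\<lambda>u. ennreal (hn u))) {x<..}" for x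
      unfolding emeasure_density_Ioi[OF int(1) nonneg(1)] emeasure_density_Ioi[OF int(2) nonneg(2)] Ioi_eq ..
  qed simp_all
  have meas: "(\<lambda>u. ennreal (hp u)) \<in> borel_measurable lborel" "(\<lambda>u. ennreal (hn u)) \<in> borel_measurable lborel"
    using int by auto
  have "AE u in lborel. ennreal (hp u) = ennreal (hn u)"
    by (rule sigma_finite_measure.density_unique[OF sigma_finite_lborel meas dens])
  then show ?thesis
    by eventually_elim (simp add: hp_def hn_def max_def split: if_splits)
qed

lemma AE_Icc_eq_0_if_orthogonal:
  fixes g :: "real \<Rightarrow> real"
  assumes meas: "g \<in> borel_measurable (restrict_space lborel {a..b})"
    and bound: "\<And>t. t \<in> {a..b} \<Longrightarrow> \<bar>g t\<bar> \<le> B"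
    and orth: "\<And>\<eta>. continuous_on UNIV \<eta> \<Longrightarrow> bounded (range \<eta>) \<Longrightarrow>
         set_lebesgue_integral lborel {a..b} (\<lambda>t. \<eta> t * g t) = 0"
  shows "AE t in lborel. t \<in> {a..b} \<longrightarrow> g t = 0"
proof -
  define h where "h t = indicator {a..b} t * g t" for t
  have h: "integrable lborel h"
    using set_integrable_Icc_if_bounded[OF meas bound] unfolding h_def by (simp add: set_integrable_def)
  have "(\<integral>u. \<eta> u * h u \<partial>lborel) = 0" if "continuous_on UNIV \<eta>" "bounded (range \<eta>)" for \<eta>
    using orth[OF that] unfolding set_lebesgue_integral_def h_def by (simp add: mult_ac)
  then have "AE t in lborel. h t = 0"
    by (intro AE_eq_0_if_integral_Ioi_eq_0 h integral_indicator_Ioi_eq_0_if_orthogonal)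
  then show ?thesis by eventually_elim (auto simp: h_def)
qed

lemma AE_Icc_eq_0_if_set_integral_eq_0:
  fixes h :: "real \<Rightarrow> real"
  assumes meas: "h \<in> borel_measurable (restrict_space lborel {a..b})"
    and nonneg: "\<And>t. t \<in> {a..b} \<Longrightarrow> 0 \<le> h t" and bound: "\<And>t. t \<in> {a..b} \<Longrightarrow> h t \<le> B"
    and zero: "set_lebesgue_integral lborel {a..b} h = 0"
  shows "AE t in lborel. t \<in> {a..b} \<longrightarrow> h t = 0"
proof -
  have int: "integrable lborel (\<lambda>t. indicator {a..b} t * h t)"
    using set_integrable_Icc_if_bounded[OF meas, of B] nonneg bound
    by (simp add: set_integrable_def)
  have "AE t in lborel. 0 \<le> indicator {a..b} t * h t"
    using nonneg by (intro AE_I2) (simp add: indicator_def)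
  from integral_nonneg_eq_0_iff_AE[OF int this] zero
  have "AE t in lborel. indicator {a..b} t * h t = 0"
    by (simp add: set_lebesgue_integral_def)
  then show ?thesis by eventually_elim (auto simp: indicator_def)
qed

lemma LIMSEQ_if_small_majorants:
  fixes x :: "nat \<Rightarrow> 'a::metric_space"
  assumes "\<And>\<epsilon>. \<epsilon> > 0 \<Longrightarrow> \<exists>b \<beta>. b \<longlonglongrightarrow> \<beta> \<and> \<beta> < \<epsilon> \<and> (\<forall>\<^sub>F n in sequentially. dist (x n) L \<le> b n)"
  shows "x \<longlonglongrightarrow> L"
proof (rule tendstoI)
  fix \<epsilon> :: real assume "\<epsilon> > 0"
  then obtain b \<beta> where b: "b \<longlonglongrightarrow> \<beta>" "\<beta> < \<epsilon>" "\<forall>\<^sub>F n in sequentially. dist (x n) L \<le> b n"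
    using assms by blast
  from order_tendstoD(2)[OF b(1,2)] b(3) show "\<forall>\<^sub>F n in sequentially. dist (x n) L < \<epsilon>"
    by eventually_elim simp
qed

lemma Cauchy_if_close_to_convergent:
  fixes x :: "nat \<Rightarrow> 'a::metric_space"
  assumes "\<And>\<epsilon>. \<epsilon> > 0 \<Longrightarrow>
    \<exists>y b \<beta>. convergent y \<and> b \<longlonglongrightarrow> \<beta> \<and> \<beta> < \<epsilon> \<and> (\<forall>\<^sub>F n in sequentially. dist (x n) (y n) \<le> b n)"
  shows "Cauchy x"
proof (rule metric_CauchyI)
  fix \<epsilon> :: real assume "\<epsilon> > 0"
  then obtain y b \<beta> where y: "convergent y" "b \<longlonglongrightarrow> \<beta>" "\<beta> < \<epsilon> / 3"
    and close: "\<forall>\<^sub>F n in sequentially. dist (x n) (y n) \<le> b n"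
    using assms[of "\<epsilon> / 3"] by auto
  obtain M1 where M1: "\<And>m n. m \<ge> M1 \<Longrightarrow> n \<ge> M1 \<Longrightarrow> dist (y m) (y n) < \<epsilon> / 3"
    using metric_CauchyD[OF convergent_Cauchy[OF y(1)], of "\<epsilon> / 3"] \<open>\<epsilon> > 0\<close> by auto
  from order_tendstoD(2)[OF y(2,3)] close
  have "\<forall>\<^sub>F n in sequentially. dist (x n) (y n) < \<epsilon> / 3" by eventually_elim simp
  then obtain M2 where M2: "\<And>n. n \<ge> M2 \<Longrightarrow> dist (x n) (y n) < \<epsilon> / 3"
    unfolding eventually_sequentially by blast
  have "dist (x m) (x n) < \<epsilon>" if "m \<ge> max M1 M2" "n \<ge> max M1 M2" for m n
  proof -
    have "dist (x m) (x n) \<le> dist (x m) (y m) + dist (y m) (y n) + dist (x n) (y n)"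
      using dist_triangle[of "x m" "x n" "y m"] dist_triangle[of "y m" "x n" "y n"]
        dist_commute[of "y n" "x n"] by linarith
    then show ?thesis using M1[of m n] M2[of m] M2[of n] that by simp
  qed
  then show "\<exists>M. \<forall>m\<ge>M. \<forall>n\<ge>M. dist (x m) (x n) < \<epsilon>" by blast
qed

lemma abs_integral_weighted_diff_le:
  fixes f g :: "real \<Rightarrow> real"
  assumes cont: "continuous_on {a..b} f" "continuous_on {a..b} g"
    and nonneg: "\<And>u. u \<in> {a..b} \<Longrightarrow> 0 \<le> g u"
    and close: "\<And>u. u \<in> {a..b} \<Longrightarrow> g u \<noteq> 0 \<Longrightarrow> \<bar>f u - y\<bar> \<le> B"
  shows "\<bar>integral {a..b} (\<lambda>u. g u * f u) - integral {a..b} g * y\<bar> \<le> integral {a..b} g * B"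
proof -
  have int: "(\<lambda>u. g u * f u) integrable_on {a..b}" "(\<lambda>u. g u * y) integrable_on {a..b}"
      "(\<lambda>u. g u * B) integrable_on {a..b}"
    by (intro integrable_continuous_interval continuous_on_mult continuous_on_const cont)+
  have pointwise: "\<bar>g u * f u - g u * y\<bar> \<le> g u * B" if "u \<in> {a..b}" for u
  proof (cases "g u = 0")
    case False
    have "\<bar>g u * f u - g u * y\<bar> = g u * \<bar>f u - y\<bar>"
      using nonneg[OF that] by (simp add: abs_mult right_diff_distrib[symmetric])
    then show ?thesis using close[OF that False] nonneg[OF that] by (simp add: mult_left_mono)
  qed simp
  have "\<bar>integral {a..b} (\<lambda>u. g u * f u) - integral {a..b} g * y\<bar>
      = \<bar>integral {a..b} (\<lambda>u. g u * f u - g u * y)\<bar>"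
    using int by (simp add: Henstock_Kurzweil_Integration.integral_diff)
  also have "\<dots> \<le> integral {a..b} (\<lambda>u. g u * B)"
    using integral_norm_bound_integral[OF integrable_diff[OF int(1,2)] int(3)] pointwise by simp
  finally show ?thesis by simp
qed

lemma (in prob_space) abs_integral_diff_le:
  fixes f g :: "'a \<Rightarrow> real"
  assumes "integrable M f" "integrable M g" "AE z in M. \<bar>f z - g z\<bar> \<le> c"
  shows "\<bar>(\<integral>z. f z \<partial>M) - (\<integral>z. g z \<partial>M)\<bar> \<le> c"
proof -
  have "(\<integral>z. f z - g z \<partial>M) \<le> c"
    using assms(3) by (intro integral_le_const) (use assms(1,2) in \<open>auto elim: eventually_mono\<close>)
  moreover have "(\<integral>z. g z - f z \<partial>M) \<le> c"
    using assms(3) by (intro integral_le_const) (use assms(1,2) in \<open>auto elim: eventually_mono\<close>)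
  ultimately show ?thesis
    using Bochner_Integration.integral_diff[OF assms(1,2)] Bochner_Integration.integral_diff[OF assms(2,1)]
    by linarith
qed

lemma continuous_on_transport: "continuous_on S (transport t0 t)"
  unfolding transport_def by (intro continuous_intros)

lemma norm_transport_diff_le: "norm (transport t0 t z - z) \<le> \<bar>t - t0\<bar> * norm z"
proof -
  have "transport t0 t z - z = (- ((t - t0) *\<^sub>R snd z), 0)"
    by (simp add: transport_def prod_eq_iff)
  then show ?thesis
    using norm_snd_le[of "snd z" "fst z"] by (simp add: mult_left_mono)
qed

lemma norm_transport_le: "norm (transport t0 t z) \<le> (1 + \<bar>t - t0\<bar>) * norm z"
  using norm_triangle_ineq[of z "transport t0 t z - z"] norm_transport_diff_le[of t0 t z]
  by (simp add: algebra_simps)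

lemma abs_inner_transport_diff_le:
  "\<bar>w \<bullet> transport t0 t z - w' \<bullet> z\<bar> \<le> norm w * \<bar>t - t0\<bar> * norm z + norm (w - w') * norm z"
proof -
  have "w \<bullet> transport t0 t z - w' \<bullet> z = w \<bullet> (transport t0 t z - z) + (w - w') \<bullet> z"
    by (simp add: inner_diff_right inner_diff_left)
  then have "\<bar>w \<bullet> transport t0 t z - w' \<bullet> z\<bar> \<le> norm w * norm (transport t0 t z - z) + norm (w - w') * norm z"
    using Cauchy_Schwarz_ineq2[of w "transport t0 t z - z"] Cauchy_Schwarz_ineq2[of "w - w'" z] by linarith
  also have "\<dots> \<le> norm w * (\<bar>t - t0\<bar> * norm z) + norm (w - w') * norm z"
    using norm_transport_diff_le[of t0 t z] by (intro add_right_mono mult_left_mono) auto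
  finally show ?thesis by (simp add: mult.assoc)
qed

lemma integral_rho_phi:
  fixes \<mu> :: "real \<Rightarrow> ('a::euclidean_space \<times> 'a) measure"
  assumes sets: "sets (\<mu> t) = sets borel"
    and \<phi>: "continuous_on UNIV \<phi>" "\<And>y. 0 \<le> \<phi> y" and \<xi>: "continuous_on UNIV \<xi>"
  shows "(\<integral>y. \<xi> y \<partial>rho_phi \<mu> t0 t \<phi>) = (\<integral>z. \<phi> (snd z) * \<xi> (fst (transport t0 t z)) \<partial>\<mu> t)"
proof -
  define D where "D = distr (\<mu> t) borel (transport t0 t)"
  have meas: "(\<lambda>y. \<xi> (fst y)) \<in> borel_measurable borel" "(\<lambda>y. \<phi> (snd y)) \<in> borel_measurable borel"
    "\<xi> \<in> borel_measurable borel"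
    by (intro borel_measurable_continuous_onI continuous_on_compose2[OF \<xi>] continuous_on_compose2[OF \<phi>(1)]
        continuous_intros \<xi>; simp)+
  have T: "transport t0 t \<in> measurable (\<mu> t) borel"
    using borel_measurable_continuous_onI[OF continuous_on_transport] by (simp add: measurable_cong_sets[OF sets refl])
  have sets_D: "sets D = sets borel" by (simp add: D_def)
  have "fst \<in> measurable (density D (\<lambda>z. ennreal (\<phi> (snd z)))) borel"
    unfolding measurable_cong_sets[OF sets_density[of D, unfolded sets_D] refl]
    by (rule borel_measurable_continuous_onI[OF continuous_on_fst[OF continuous_on_id]])
  then have "(\<integral>y. \<xi> y \<partial>rho_phi \<mu> t0 t \<phi>) = (\<integral>y. \<xi> (fst y) \<partial>density D (\<lambda>z. ennreal (\<phi> (snd z))))"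
    unfolding rho_phi_def D_def[symmetric] by (rule integral_distr) (rule meas)
  also have "\<dots> = (\<integral>y. \<phi> (snd y) *\<^sub>R \<xi> (fst y) \<partial>D)"
    by (rule integral_density) (simp_all add: measurable_cong_sets[OF sets_D refl] meas \<phi>(2))
  also have "\<dots> = (\<integral>z. \<phi> (snd (transport t0 t z)) *\<^sub>R \<xi> (fst (transport t0 t z)) \<partial>\<mu> t)"
    unfolding D_def by (rule integral_distr[OF T]) (simp add: borel_measurable_times meas)
  finally show ?thesis by (simp add: transport_def)
qed

lemma integral_pos_if_continuous_nonneg:
  fixes g :: "real \<Rightarrow> real"
  assumes "continuous_on {a..b} g" "a < b" "\<And>u. u \<in> {a..b} \<Longrightarrow> 0 \<le> g u" "t \<in> {a..b}" "g t > 0"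
  shows "integral {a..b} g > 0"
proof -
  have "integral {a..b} g \<noteq> 0"
    using integral_eq_0_iff[OF assms(1,2,3)] assms(4,5) by force
  moreover have "integral {a..b} g \<ge> 0"
    using assms(3) by (intro integral_nonneg integrable_continuous_interval assms(1)) auto
  ultimately show ?thesis by simp
qed

lemma exists_bump_function:
  fixes a b t :: real
  assumes "a < t" "t < b"
  obtains g :: "real \<Rightarrow> real"
  where "continuous_on UNIV g" "bounded (range g)" "\<And>u. 0 \<le> g u" "g t > 0"
    "\<And>u. g u \<noteq> 0 \<Longrightarrow> a < u \<and> u < b"
proof -
  define r where "r = min (t - a) (b - t)"
  show ?thesis
  proof (rule that[of "\<lambda>u. max 0 (r - \<bar>u - t\<bar>)"])
    show "continuous_on UNIV (\<lambda>u. max 0 (r - \<bar>u - t\<bar>))" by (intro continuous_intros)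
    show "bounded (range (\<lambda>u. max 0 (r - \<bar>u - t\<bar>)))"
      unfolding bounded_iff by (intro exI[of _ r]) (use assms in \<open>auto simp: r_def\<close>)
    show "max 0 (r - \<bar>t - t\<bar>) > 0" using assms by (simp add: r_def)
    show "a < u \<and> u < b" if "max 0 (r - \<bar>u - t\<bar>) \<noteq> 0" for u
      using that by (auto simp: r_def max_def split: if_splits)
  qed simp
qed

lemma AE_imp_conull_subset:
  assumes "AE t in lborel. t \<in> S \<longrightarrow> P t" "S \<in> sets lborel"
  shows "\<exists>A\<subseteq>S. S - A \<in> null_sets lborel \<and> (\<forall>t\<in>A. P t)"
proof -
  obtain Z where Z: "{t \<in> space lborel. \<not> (t \<in> S \<longrightarrow> P t)} \<subseteq> Z"
    "emeasure lborel Z = 0" "Z \<in> sets lborel"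
    using AE_E[OF assms(1)] by blast
  then have "S - (S - Z) \<in> null_sets lborel"
    using null_set_Int2[of Z lborel S] assms(2) by (simp add: null_setsI Int_commute Diff_Diff_Int)
  moreover have "\<forall>t\<in>S - Z. P t" using Z(1) by auto
  ultimately show ?thesis by blast
qed

lemma test_function_continuous: "test_function \<phi> \<Longrightarrow> continuous_on UNIV \<phi>"
  unfolding test_function_def smooth_fun_def by auto

section \<open>Trigonometric polynomials\<close>

inductive trig_poly :: "('a::real_inner \<Rightarrow> real) \<Rightarrow> bool" where
  cos: "trig_poly (\<lambda>z. cos (w \<bullet> z + p))"
| add: "trig_poly f \<Longrightarrow> trig_poly g \<Longrightarrow> trig_poly (\<lambda>z. f z + g z)"
| scale: "trig_poly f \<Longrightarrow> trig_poly (\<lambda>z. c * f z)"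

lemma trig_poly_const: "trig_poly (\<lambda>z. c)"
  using trig_poly.scale[OF trig_poly.cos[of 0 0], of c] by simp

lemma trig_poly_continuous: "trig_poly f \<Longrightarrow> continuous_on S f"
  by (induction rule: trig_poly.induct) (intro continuous_intros | assumption)+

lemma trig_poly_bounded: "trig_poly f \<Longrightarrow> \<exists>B. \<forall>z. \<bar>f z\<bar> \<le> B"
proof (induction rule: trig_poly.induct)
  case (cos w p)
  then show ?case by (intro exI[of _ 1]) auto
next
  case (add f g)
  then obtain B1 B2 where "\<And>z. \<bar>f z\<bar> \<le> B1" "\<And>z. \<bar>g z\<bar> \<le> B2" by blast
  then have "\<bar>f z + g z\<bar> \<le> B1 + B2" for z by (meson abs_triangle_ineq add_mono order_trans)
  then show ?case by blast
next
  case (scale f c)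
  then obtain B where "\<And>z. \<bar>f z\<bar> \<le> B" by blast
  then have "\<bar>c * f z\<bar> \<le> \<bar>c\<bar> * B" for z by (simp add: abs_mult mult_left_mono)
  then show ?case by blast
qed

lemma trig_poly_mult_cos: "trig_poly g \<Longrightarrow> trig_poly (\<lambda>z. cos (w \<bullet> z + p) * g z)"
proof (induction rule: trig_poly.induct)
  case (cos w' p')
  have prod: "(\<lambda>z. cos (w \<bullet> z + p) * cos (w' \<bullet> z + p')) =
      (\<lambda>z. (1/2) * cos ((w - w') \<bullet> z + (p - p')) + (1/2) * cos ((w + w') \<bullet> z + (p + p')))"
    by (simp add: cos_times_cos fun_eq_iff algebra_simps add_divide_distrib)
  show ?case unfolding prod by (intro trig_poly.add trig_poly.scale trig_poly.cos)
next
  case (add f g)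
  then show ?case using trig_poly.add[OF add.IH] by (simp add: distrib_left)
next
  case (scale f c)
  then show ?case using trig_poly.scale[OF scale.IH, of c] by (simp add: mult.left_commute)
qed

lemma trig_poly_mult: "trig_poly f \<Longrightarrow> trig_poly g \<Longrightarrow> trig_poly (\<lambda>z. f z * g z)"
proof (induction arbitrary: g rule: trig_poly.induct)
  case (cos w p)
  then show ?case by (rule trig_poly_mult_cos)
next
  case (add f1 f2)
  then show ?case using trig_poly.add[OF add.IH] by (simp add: distrib_right)
next
  case (scale f c)
  then show ?case using trig_poly.scale[OF scale.IH, where c=c] by (simp add: mult.assoc)
qed

lemma trig_poly_separates:
  assumes "x \<noteq> y" shows "\<exists>f. trig_poly f \<and> f x \<noteq> f y"
proof -
  \<comment> \<open>A frequency with \<open>w \<bullet> (x - y) = \<pi>\<close> and a phase making the value at \<open>x\<close> equal to \<open>1\<close>.\<close>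
  define w where "w = (pi / (norm (x - y))\<^sup>2) *\<^sub>R (x - y)"
  have "w \<bullet> (x - y) = pi"
    using assms by (simp add: w_def power2_norm_eq_inner)
  then have "cos (w \<bullet> x + - (w \<bullet> x)) \<noteq> cos (w \<bullet> y + - (w \<bullet> x))"
    by (simp add: algebra_simps)
  then show ?thesis using trig_poly.cos by blast
qed

lemma trig_poly_uniform_approx:
  fixes f :: "'a::real_inner \<Rightarrow> real"
  assumes "compact K" "continuous_on K f" "\<epsilon> > 0"
  shows "\<exists>h. trig_poly h \<and> (\<forall>z\<in>K. \<bar>f z - h z\<bar> < \<epsilon>)"
  by (rule Stone_Weierstrass_HOL[OF assms(1) trig_poly_const trig_poly_continuous
        trig_poly.add[OF conjunct1 conjunct2] trig_poly_mult[OF conjunct1 conjunct2]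
        trig_poly_separates[OF conjunct2[OF conjunct2]] assms(2,3)])

section \<open>The limit of approximative solutions\<close>

locale approximative_solution_limit =
  fixes \<alpha> T M :: real and N :: "nat \<Rightarrow> nat" and x v :: "nat \<Rightarrow> nat \<Rightarrow> real \<Rightarrow> 'a::euclidean_space"
    and \<mu> :: "real \<Rightarrow> ('a \<times> 'a) measure"
  assumes T_pos: "T > 0" and \<alpha>: "1 \<le> \<alpha>" "\<alpha> \<le> 2" and N_pos: "\<forall>n. 0 < N n"
    and particles: "\<forall>n. particle_solution \<alpha> T (N n) (x n) (v n)"
    and particle_bounds: "\<forall>n i t. i < N n \<and> t \<in> {0..T} \<longrightarrow>
           x n i t \<in> ball 0 ((T + 1) * M) \<and> v n i t \<in> ball 0 M"
    and prob_space_mu: "\<forall>t\<in>{0..T}. prob_space (\<mu> t) \<and> sets (\<mu> t) = sets borel"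
    and weak_limit: "\<forall>g :: real \<times> ('a \<times> 'a) \<Rightarrow> real.
           continuous_on ({0..T} \<times> UNIV) g \<and> bounded (g ` ({0..T} \<times> UNIV)) \<longrightarrow>
             (\<lambda>t. \<integral>z. g (t, z) \<partial>\<mu> t) \<in> borel_measurable (restrict_space lborel {0..T}) \<and>
             (\<lambda>n. set_lebesgue_integral lborel {0..T}
                    (\<lambda>t. (\<Sum>i<N n. g (t, (x n i t, v n i t))) / real (N n)))
               \<longlonglongrightarrow> set_lebesgue_integral lborel {0..T} (\<lambda>t. \<integral>z. g (t, z) \<partial>\<mu> t)"
    and energy_limit: "AE t in lborel. t \<in> {0..T} \<longrightarrow>
           (\<lambda>n. (\<Sum>i<N n. (norm (v n i t))\<^sup>2) / real (N n)) \<longlonglongrightarrow> (\<integral>z. (norm (snd z))\<^sup>2 \<partial>\<mu> t)"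
begin

abbreviation energy :: "nat \<Rightarrow> real \<Rightarrow> real" where
  "energy n t \<equiv> kinetic_energy (N n) (\<lambda>i. v n i t)"

abbreviation emp_cos :: "'a \<times> 'a \<Rightarrow> real \<Rightarrow> nat \<Rightarrow> real \<Rightarrow> real" where
  "emp_cos w p n t \<equiv> cos_average (N n) w p (\<lambda>i. x n i t) (\<lambda>i. v n i t)"

abbreviation rate_const :: "'a \<times> 'a \<Rightarrow> real" where
  "rate_const w \<equiv> cos_rate_const M (2 * ((T + 1) * M)) w"

definition limit_energy :: "real \<Rightarrow> real" where
  "limit_energy t = (\<integral>z. (norm (snd z))\<^sup>2 \<partial>\<mu> t)"

definition cos_moment :: "'a \<times> 'a \<Rightarrow> real \<Rightarrow> real \<Rightarrow> real" where
  "cos_moment w p t = (\<integral>z. cos (w \<bullet> z + p) \<partial>\<mu> t)"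

definition support_radius :: real where
  "support_radius = (T + 1) * M + M"

lemma M_pos: "M > 0"
proof -
  have "v 0 0 0 \<in> ball 0 M" using particle_bounds N_pos T_pos by auto
  then show ?thesis by (simp add: le_less_trans[OF norm_ge_zero])
qed

lemma support_radius_nonneg: "0 \<le> support_radius"
  using M_pos T_pos by (simp add: support_radius_def)

lemma rate_const_nonneg: "0 \<le> rate_const w"
  using M_pos T_pos by (intro cos_rate_const_nonneg) auto

lemma prob_space_mu_at: "t \<in> {0..T} \<Longrightarrow> prob_space (\<mu> t)"
  and sets_mu: "t \<in> {0..T} \<Longrightarrow> sets (\<mu> t) = sets borel"
  using prob_space_mu by auto

lemma integrable_mu_if_AE_bounded:
  fixes g :: "'a \<times> 'a \<Rightarrow> real"
  assumes "t \<in> {0..T}" "continuous_on UNIV g" "AE z in \<mu> t. \<bar>g z\<bar> \<le> B"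
  shows "integrable (\<mu> t) g"
proof -
  interpret prob_space "\<mu> t" using prob_space_mu_at[OF assms(1)] .
  have "g \<in> borel_measurable (\<mu> t)"
    using borel_measurable_continuous_onI[OF assms(2)] measurable_cong_sets[OF sets_mu[OF assms(1)] refl] by blast
  then show ?thesis using assms(3) by (intro integrable_const_bound[where B=B]) auto
qed

lemma particle_norms_le:
  "i < N n \<Longrightarrow> t \<in> {0..T} \<Longrightarrow> norm (x n i t) \<le> (T + 1) * M \<and> norm (v n i t) \<le> M"
  using particle_bounds by (auto simp: less_imp_le)

lemma energy_antimono: "0 \<le> s \<Longrightarrow> s \<le> t \<Longrightarrow> t \<le> T \<Longrightarrow> energy n t \<le> energy n s"
  using particle_kinetic_energy_antimono[OF spec[OF N_pos] \<alpha> spec[OF particles] particle_norms_le] .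

lemma emp_cos_increment_le:
  "0 \<le> s \<Longrightarrow> s \<le> t \<Longrightarrow> t \<le> T \<Longrightarrow>
    \<bar>emp_cos w p n t - emp_cos w p n s\<bar> \<le> rate_const w * (t - s) + cos_energy_const w * (energy n s - energy n t)"
  using particle_cos_average_increment_le[OF spec[OF N_pos] \<alpha> spec[OF particles] particle_norms_le] .

lemma continuous_on_emp_cos: "continuous_on {0..T} (emp_cos w p n)"
  using continuous_on_particle_cos_average[OF spec[OF N_pos] \<alpha> spec[OF particles] particle_norms_le] .

lemma emp_cos_measurable: "emp_cos w p n \<in> borel_measurable (restrict_space lborel {0..T})"
  by (rule borel_measurable_restrict_Icc_if_continuous_on[OF continuous_on_emp_cos])

lemma abs_emp_cos_le_1: "\<bar>emp_cos w p n t\<bar> \<le> 1"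
  using abs_cos_average_le_1 N_pos by blast

lemma abs_cos_moment_le_1: "t \<in> {0..T} \<Longrightarrow> \<bar>cos_moment w p t\<bar> \<le> 1"
proof -
  assume t: "t \<in> {0..T}"
  interpret prob_space "\<mu> t" using prob_space_mu_at[OF t] .
  have "continuous_on UNIV (\<lambda>z. cos (w \<bullet> z + p))" by (intro continuous_intros)
  then have "integrable (\<mu> t) (\<lambda>z. cos (w \<bullet> z + p))"
    by (rule integrable_mu_if_AE_bounded[OF t _ AE_I2, where B=1]) simp
  then show ?thesis
    unfolding cos_moment_def by (intro abs_integral_diff_le[where g="\<lambda>_. 0", simplified]) auto
qed

lemma weak_limit_cos:
  assumes "continuous_on UNIV \<eta>" "bounded (range \<eta>)"
  shows "(\<lambda>t. \<eta> t * cos_moment w p t) \<in> borel_measurable (restrict_space lborel {0..T})"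
    and "(\<lambda>n. set_lebesgue_integral lborel {0..T} (\<lambda>t. \<eta> t * emp_cos w p n t))
          \<longlonglongrightarrow> set_lebesgue_integral lborel {0..T} (\<lambda>t. \<eta> t * cos_moment w p t)"
proof -
  define g where "g y = \<eta> (fst y) * cos (w \<bullet> snd y + p)" for y :: "real \<times> ('a \<times> 'a)"
  obtain B where B: "\<And>t. \<bar>\<eta> t\<bar> \<le> B" using assms(2) unfolding bounded_iff by auto
  have cont: "continuous_on ({0..T} \<times> UNIV) g"
    unfolding g_def by (intro continuous_intros continuous_on_compose2[OF assms(1)]) auto
  have bdd: "bounded (g ` ({0..T} \<times> UNIV))"
    unfolding bounded_iff g_def
    by (intro exI[of _ B]) (auto simp: abs_mult intro: order_trans[OF mult_left_le[OF abs_cos_le_one abs_ge_zero] B])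
  note lim = weak_limit[rule_format, OF conjI[OF cont bdd]]
  have "(\<lambda>t. (\<Sum>i<N n. g (t, (x n i t, v n i t))) / real (N n)) = (\<lambda>t. \<eta> t * emp_cos w p n t)" for n
    by (simp add: g_def cos_average_def sum_distrib_left fun_eq_iff)
  moreover have "(\<lambda>t. \<integral>z. g (t, z) \<partial>\<mu> t) = (\<lambda>t. \<eta> t * cos_moment w p t)"
    by (simp add: g_def cos_moment_def fun_eq_iff)
  ultimately show "(\<lambda>t. \<eta> t * cos_moment w p t) \<in> borel_measurable (restrict_space lborel {0..T})"
    and "(\<lambda>n. set_lebesgue_integral lborel {0..T} (\<lambda>t. \<eta> t * emp_cos w p n t))
          \<longlonglongrightarrow> set_lebesgue_integral lborel {0..T} (\<lambda>t. \<eta> t * cos_moment w p t)"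
    using lim by simp_all
qed

lemma cos_moment_measurable: "cos_moment w p \<in> borel_measurable (restrict_space lborel {0..T})"
  using weak_limit_cos(1)[of "\<lambda>_. 1"] by simp

lemma support_excess_AE_zero:
  "AE t in lborel. t \<in> {0..T} \<longrightarrow> (\<integral>z. min 1 (max 0 (norm z - support_radius)) \<partial>\<mu> t) = 0"
proof -
  define g where "g y = min 1 (max 0 (norm (snd y) - support_radius))" for y :: "real \<times> ('a \<times> 'a)"
  define h where "h t = (\<integral>z. g (t, z) \<partial>\<mu> t)" for t
  have cont: "continuous_on ({0..T} \<times> UNIV) g" unfolding g_def by (intro continuous_intros)
  have bdd: "bounded (g ` ({0..T} \<times> UNIV))" unfolding bounded_iff g_def by (intro exI[of _ 1]) auto
  note lim = weak_limit[rule_format, OF conjI[OF cont bdd], folded h_def]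
  have inside: "(\<Sum>i<N n. g (t, (x n i t, v n i t))) / real (N n) = 0" if t: "t \<in> {0..T}" for n t
  proof -
    have "g (t, (x n i t, v n i t)) = 0" if "i < N n" for i
      using norm_Pair_le[of "x n i t" "v n i t"] particle_norms_le[OF that t]
      by (simp add: g_def support_radius_def)
    then show ?thesis by simp
  qed
  have "(\<lambda>n. set_lebesgue_integral lborel {0..T} (\<lambda>t. (\<Sum>i<N n. g (t, (x n i t, v n i t))) / real (N n)))
      = (\<lambda>n. 0)"
    by (intro ext, subst set_lebesgue_integral_cong[where g="\<lambda>_. 0"])
       (auto simp: inside set_lebesgue_integral_def)
  with lim have "set_lebesgue_integral lborel {0..T} h = 0"
    by (simp add: LIMSEQ_const_iff)
  moreover have "0 \<le> h t" "h t \<le> 1" if t: "t \<in> {0..T}" for t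
  proof -
    interpret prob_space "\<mu> t" using prob_space_mu_at[OF t] .
    have "continuous_on UNIV (\<lambda>z. g (t, z))" unfolding g_def by (intro continuous_intros)
    then have "integrable (\<mu> t) (\<lambda>z. g (t, z))"
      by (rule integrable_mu_if_AE_bounded[OF t _ AE_I2, where B=1]) (simp add: g_def)
    then show "0 \<le> h t" "h t \<le> 1"
      unfolding h_def by (auto intro!: integral_nonneg integral_le_const simp: g_def)
  qed
  ultimately have "AE t in lborel. t \<in> {0..T} \<longrightarrow> h t = 0"
    using lim by (intro AE_Icc_eq_0_if_set_integral_eq_0) auto
  then show ?thesis by (simp add: h_def g_def)
qed

lemma support_AE: "AE t in lborel. t \<in> {0..T} \<longrightarrow> (AE z in \<mu> t. norm z \<le> support_radius)"
  using support_excess_AE_zero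
proof eventually_elim
  case (elim t)
  show ?case
  proof
    assume t: "t \<in> {0..T}"
    define g where "g z = min 1 (max 0 (norm z - support_radius))" for z :: "'a \<times> 'a"
    have "continuous_on UNIV g" unfolding g_def by (intro continuous_intros)
    then have "integrable (\<mu> t) g"
      by (rule integrable_mu_if_AE_bounded[OF t _ AE_I2, where B=1]) (simp add: g_def)
    moreover have "AE z in \<mu> t. 0 \<le> g z" by (simp add: g_def)
    moreover have "(\<integral>z. g z \<partial>\<mu> t) = 0" using elim t by (simp add: g_def)
    ultimately have "AE z in \<mu> t. g z = 0"
      using integral_nonneg_eq_0_iff_AE by blast
    then show "AE z in \<mu> t. norm z \<le> support_radius"
      by eventually_elim (simp add: g_def)
  qed
qed

definition energy_conv_times :: "real set" where
  "energy_conv_times = {t \<in> {0..T}. (\<lambda>n. energy n t) \<longlonglongrightarrow> limit_energy t}"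

definition regular_time :: "real \<Rightarrow> bool" where
  "regular_time t \<longleftrightarrow> t \<in> energy_conv_times \<and> continuous (at t within energy_conv_times) limit_energy \<and> 0 < t \<and> t < T"

lemma AE_energy_conv_times: "AE t in lborel. t \<in> {0..T} \<longrightarrow> t \<in> energy_conv_times"
  using energy_limit unfolding energy_conv_times_def limit_energy_def kinetic_energy_def by simp

lemma limit_energy_antimono:
  "s \<in> energy_conv_times \<Longrightarrow> t \<in> energy_conv_times \<Longrightarrow> s \<le> t \<Longrightarrow> limit_energy t \<le> limit_energy s"
  unfolding energy_conv_times_def by (auto intro!: LIMSEQ_le[of "\<lambda>n. energy n t" _ "\<lambda>n. energy n s"] energy_antimono)

lemma AE_regular_time: "AE t in lborel. t \<in> {0..T} \<longrightarrow> regular_time t"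
proof -
  \<comment> \<open>A monotone function has only countably many discontinuities.\<close>
  have "mono_on energy_conv_times (\<lambda>t. - limit_energy t)"
    by (auto simp: mono_on_def intro: limit_energy_antimono)
  moreover have "continuous F (\<lambda>t. - limit_energy t) \<longleftrightarrow> continuous F limit_energy" for F
    using continuous_minus[of F limit_energy] continuous_minus[of F "\<lambda>t. - limit_energy t"] by auto
  ultimately have "countable {t \<in> energy_conv_times. \<not> continuous (at t within energy_conv_times) limit_energy}"
    using mono_on_ctble_discont by fastforce
  then have "{t \<in> energy_conv_times. \<not> continuous (at t within energy_conv_times) limit_energy} \<union> {0, T}
      \<in> null_sets lborel"
    by (intro countable_imp_null_set_lborel) auto
  from AE_not_in[OF this] AE_energy_conv_times show ?thesis
    by eventually_elim (auto simp: regular_time_def)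
qed

lemma energy_conv_times_dense:
  assumes "0 \<le> c" "c < d" "d \<le> T"
  obtains a where "a \<in> energy_conv_times" "c < a" "a < d"
proof (rule ccontr)
  assume "\<not> thesis"
  with that have "{c<..<d} \<subseteq> {t \<in> space lborel. \<not> (t \<in> {0..T} \<longrightarrow> t \<in> energy_conv_times)}"
    using assms by force
  moreover obtain Z where "{t \<in> space lborel. \<not> (t \<in> {0..T} \<longrightarrow> t \<in> energy_conv_times)} \<subseteq> Z"
    "emeasure lborel Z = 0" "Z \<in> sets lborel"
    using AE_energy_conv_times by (rule AE_E)
  ultimately have "emeasure lborel {c<..<d} \<le> 0"
    by (metis emeasure_mono order_trans)
  then show False using assms by simp
qed

lemma regular_time_bracket:
  assumes t: "regular_time t" and \<epsilon>: "\<epsilon> > 0"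
  obtains a b where "a \<in> energy_conv_times" "b \<in> energy_conv_times" "a < t" "t < b"
    "rate_const w * (b - a) + cos_energy_const w * (limit_energy a - limit_energy b) < \<epsilon>"
proof -
  define C0 where "C0 = rate_const w"
  define C1 where "C1 = cos_energy_const w"
  have C: "0 \<le> C0" "0 \<le> C1" unfolding C0_def C1_def by (simp_all add: rate_const_nonneg cos_energy_const_nonneg)
  define \<eta> where "\<eta> = \<epsilon> / (4 * (C1 + 1))"
  have "\<eta> > 0" using \<epsilon> C by (simp add: \<eta>_def)
  then obtain \<delta> where \<delta>: "\<delta> > 0"
    "\<And>u. u \<in> energy_conv_times \<Longrightarrow> dist u t < \<delta> \<Longrightarrow> dist (limit_energy u) (limit_energy t) < \<eta>"
    using t unfolding regular_time_def continuous_within_eps_delta by blast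
  define r where "r = min (min \<delta> (\<epsilon> / (4 * (C0 + 1)))) (min t (T - t))"
  have r: "r > 0" "r \<le> \<delta>" "r \<le> \<epsilon> / (4 * (C0 + 1))" "r \<le> t" "r \<le> T - t"
    using \<delta> \<epsilon> C t unfolding r_def regular_time_def by auto
  obtain a where a: "a \<in> energy_conv_times" "t - r < a" "a < t"
    using energy_conv_times_dense[of "t - r" t] r t unfolding regular_time_def by auto
  obtain b where b: "b \<in> energy_conv_times" "t < b" "b < t + r"
    using energy_conv_times_dense[of t "t + r"] r t unfolding regular_time_def by auto
  have "C0 * (b - a) \<le> C0 * (2 * r)" using a b C by (intro mult_left_mono) auto
  also have "\<dots> \<le> 2 * C0 * (\<epsilon> / (4 * (C0 + 1)))"
    using mult_left_mono[OF r(3), of "2 * C0"] C by (simp add: algebra_simps)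
  also have "\<dots> < \<epsilon> / 2" using C \<epsilon> by (simp add: field_simps)
  finally have "C0 * (b - a) < \<epsilon> / 2" .
  moreover have "limit_energy a - limit_energy b < 2 * \<eta>"
    using \<delta>(2)[OF a(1)] \<delta>(2)[OF b(1)] a b r by (auto simp: dist_real_def)
  then have "C1 * (limit_energy a - limit_energy b) \<le> C1 * (2 * \<eta>)" using C by (simp add: mult_left_mono)
  moreover have "C1 * (2 * \<eta>) < \<epsilon> / 2" using C \<epsilon> by (simp add: \<eta>_def field_simps)
  ultimately show ?thesis
    using that[OF a(1) b(1) a(3) b(2)] unfolding C0_def C1_def by linarith
qed

lemma emp_cos_oscillation_le:
  assumes "0 \<le> a" "a \<le> u" "a \<le> t" "u \<le> b" "t \<le> b" "b \<le> T"
  shows "\<bar>emp_cos w p n u - emp_cos w p n t\<bar>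
    \<le> rate_const w * (b - a) + cos_energy_const w * (energy n a - energy n b)"
proof -
  have "\<bar>emp_cos w p n s' - emp_cos w p n s\<bar>
      \<le> rate_const w * (b - a) + cos_energy_const w * (energy n a - energy n b)"
    if "a \<le> s" "s \<le> s'" "s' \<le> b" for s s'
  proof -
    have "energy n s \<le> energy n a" "energy n b \<le> energy n s'"
      using that assms by (auto intro: energy_antimono)
    then have "rate_const w * (s' - s) + cos_energy_const w * (energy n s - energy n s')
        \<le> rate_const w * (b - a) + cos_energy_const w * (energy n a - energy n b)"
      using that rate_const_nonneg[of w] cos_energy_const_nonneg[of w] by (intro add_mono mult_left_mono) auto
    moreover have "\<bar>emp_cos w p n s' - emp_cos w p n s\<bar>
        \<le> rate_const w * (s' - s) + cos_energy_const w * (energy n s - energy n s')"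
      by (rule emp_cos_increment_le) (use that assms in auto)
    ultimately show ?thesis by linarith
  qed
  from this[of u t] this[of t u] assms show ?thesis
    by (cases "u \<le> t") (auto simp: abs_minus_commute)
qed

lemma integral_mult_emp_cos_tendsto:
  assumes "continuous_on UNIV \<eta>" "bounded (range \<eta>)"
  shows "(\<lambda>n. integral {0..T} (\<lambda>t. \<eta> t * emp_cos w p n t))
    \<longlonglongrightarrow> set_lebesgue_integral lborel {0..T} (\<lambda>t. \<eta> t * cos_moment w p t)"
proof -
  have "continuous_on {0..T} (\<lambda>t. \<eta> t * emp_cos w p n t)" for n
    by (intro continuous_on_mult continuous_on_emp_cos continuous_on_subset[OF assms(1)]) auto
  then have "set_lebesgue_integral lborel {0..T} (\<lambda>t. \<eta> t * emp_cos w p n t)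
      = integral {0..T} (\<lambda>t. \<eta> t * emp_cos w p n t)" for n
    by (intro set_borel_integral_eq_integral(2) borel_integrable_atLeastAtMost')
  then show ?thesis using weak_limit_cos(2)[OF assms, where w=w and p=p] by simp
qed

lemma emp_cos_Cauchy:
  assumes t: "regular_time t"
  shows "Cauchy (\<lambda>n. emp_cos w p n t)"
proof (rule Cauchy_if_close_to_convergent)
  fix \<epsilon> :: real assume "\<epsilon> > 0"
  then obtain a b where ab: "a \<in> energy_conv_times" "b \<in> energy_conv_times" "a < t" "t < b"
    and small: "rate_const w * (b - a) + cos_energy_const w * (limit_energy a - limit_energy b) < \<epsilon>"
    using regular_time_bracket[OF t] by blast
  have ab_T: "0 \<le> a" "b \<le> T" using ab unfolding energy_conv_times_def by auto
  then have t_T: "t \<in> {0..T}" using ab by auto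
  obtain g :: "real \<Rightarrow> real" where g: "continuous_on UNIV g" "bounded (range g)" "\<And>u. 0 \<le> g u" "g t > 0"
    "\<And>u. g u \<noteq> 0 \<Longrightarrow> a < u \<and> u < b"
    using exists_bump_function[OF ab(3,4)] by blast
  \<comment> \<open>Averages against a bump supported in \<open>(a, b)\<close> converge by the weak limit and differ from the
    value at \<open>t\<close> by at most the oscillation on \<open>[a, b]\<close>, which the energy drop controls.\<close>
  define c where "c = integral {0..T} g"
  have c: "c > 0"
    unfolding c_def using g(3,4) t_T T_pos
    by (intro integral_pos_if_continuous_nonneg[of _ _ _ t] continuous_on_subset[OF g(1)]) auto
  define y where "y n = integral {0..T} (\<lambda>u. g u * emp_cos w p n u) / c" for n
  have "convergent y"
    unfolding y_def using tendsto_divide[OF integral_mult_emp_cos_tendsto[OF g(1,2)] tendsto_const, of c w p] c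
    by (auto intro: convergentI)
  moreover have "dist (emp_cos w p n t) (y n)
      \<le> rate_const w * (b - a) + cos_energy_const w * (energy n a - energy n b)" for n
  proof -
    have "\<bar>integral {0..T} (\<lambda>u. g u * emp_cos w p n u) - c * emp_cos w p n t\<bar>
        \<le> c * (rate_const w * (b - a) + cos_energy_const w * (energy n a - energy n b))"
      unfolding c_def using g(3,5) ab ab_T
      by (intro abs_integral_weighted_diff_le continuous_on_emp_cos continuous_on_subset[OF g(1)]
          emp_cos_oscillation_le) (auto dest: g(5))
    then show ?thesis
      using c by (simp add: y_def dist_real_def field_simps abs_minus_commute)
  qed
  moreover have "(\<lambda>n. rate_const w * (b - a) + cos_energy_const w * (energy n a - energy n b))
      \<longlonglongrightarrow> rate_const w * (b - a) + cos_energy_const w * (limit_energy a - limit_energy b)"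
    using ab unfolding energy_conv_times_def by (intro tendsto_add tendsto_mult_left tendsto_diff tendsto_const) auto
  ultimately show "\<exists>y b \<beta>. convergent y \<and> b \<longlonglongrightarrow> \<beta> \<and> \<beta> < \<epsilon> \<and>
      (\<forall>\<^sub>F n in sequentially. dist (emp_cos w p n t) (y n) \<le> b n)"
    using small by (intro exI conjI always_eventually allI) auto
qed

\<comment> \<open>Clipping to \<open>[-1, 1]\<close> makes the function bounded also at irregular times, where \<open>lim\<close> is unspecified.\<close>
definition limit_cos :: "'a \<times> 'a \<Rightarrow> real \<Rightarrow> real \<Rightarrow> real" where
  "limit_cos w p t = max (-1) (min 1 (lim (\<lambda>n. emp_cos w p n t)))"

lemma abs_limit_cos_le_1: "\<bar>limit_cos w p t\<bar> \<le> 1"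
  by (simp add: limit_cos_def)

lemma emp_cos_tendsto_limit_cos:
  assumes "regular_time t"
  shows "(\<lambda>n. emp_cos w p n t) \<longlonglongrightarrow> limit_cos w p t"
proof -
  have lim: "(\<lambda>n. emp_cos w p n t) \<longlonglongrightarrow> lim (\<lambda>n. emp_cos w p n t)"
    using emp_cos_Cauchy[OF assms] by (simp add: Cauchy_convergent_iff convergent_LIMSEQ_iff)
  have "\<bar>lim (\<lambda>n. emp_cos w p n t)\<bar> \<le> 1"
    by (rule LIMSEQ_le_const2[OF tendsto_rabs[OF lim]]) (use abs_emp_cos_le_1 in auto)
  then show ?thesis using lim by (simp add: limit_cos_def)
qed

lemma limit_cos_measurable: "limit_cos w p \<in> borel_measurable (restrict_space lborel {0..T})"
proof -
  have "(\<lambda>t. lim (\<lambda>n. emp_cos w p n t)) \<in> borel_measurable (restrict_space lborel {0..T})"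
    by (rule borel_measurable_lim_metric[OF emp_cos_measurable])
  then show ?thesis unfolding limit_cos_def by measurable
qed

lemma set_integral_mult_emp_cos_tendsto_limit_cos:
  assumes "continuous_on UNIV \<eta>" "bounded (range \<eta>)"
  shows "(\<lambda>n. set_lebesgue_integral lborel {0..T} (\<lambda>t. \<eta> t * emp_cos w p n t))
    \<longlonglongrightarrow> set_lebesgue_integral lborel {0..T} (\<lambda>t. \<eta> t * limit_cos w p t)"
proof -
  obtain B where B: "\<And>t. \<bar>\<eta> t\<bar> \<le> B" using assms(2) unfolding bounded_iff by auto
  have \<eta>: "\<eta> \<in> borel_measurable borel" using borel_measurable_continuous_onI[OF assms(1)] .
  show ?thesis
    unfolding set_lebesgue_integral_def
  proof (rule integral_dominated_convergence)
    show "integrable lborel (\<lambda>t. indicator {0..T} t * B)"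
      by (intro integrable_mult_left integrable_real_indicator) (auto simp: emeasure_lborel_Icc_eq)
    have meas: "(\<lambda>t. indicator {0..T} t *\<^sub>R (\<eta> t * f t)) \<in> borel_measurable lborel"
      if "f \<in> borel_measurable (restrict_space lborel {0..T})" for f
    proof -
      have "(\<lambda>t. indicator {0..T} t * f t) \<in> borel_measurable borel"
        using that by (subst (asm) borel_measurable_restrict_space_iff) auto
      from borel_measurable_times[OF \<eta> this] show ?thesis by (simp add: mult.left_commute)
    qed
    show "(\<lambda>t. indicator {0..T} t *\<^sub>R (\<eta> t * limit_cos w p t)) \<in> borel_measurable lborel"
      by (rule meas[OF limit_cos_measurable])
    show "(\<lambda>t. indicator {0..T} t *\<^sub>R (\<eta> t * emp_cos w p n t)) \<in> borel_measurable lborel" for n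
      by (rule meas[OF emp_cos_measurable])
    show "AE t in lborel. norm (indicator {0..T} t *\<^sub>R (\<eta> t * emp_cos w p n t)) \<le> indicator {0..T} t * B" for n
      using mult_mono[OF B abs_emp_cos_le_1 order_trans[OF abs_ge_zero B] abs_ge_zero]
      by (intro AE_I2) (auto simp: indicator_def abs_mult)
    show "AE t in lborel. (\<lambda>n. indicator {0..T} t *\<^sub>R (\<eta> t * emp_cos w p n t))
        \<longlonglongrightarrow> indicator {0..T} t *\<^sub>R (\<eta> t * limit_cos w p t)"
      using AE_regular_time
      by eventually_elim (auto simp: indicator_def intro!: tendsto_mult_left emp_cos_tendsto_limit_cos)
  qed
qed

lemma limit_cos_eq_cos_moment_AE: "AE t in lborel. t \<in> {0..T} \<longrightarrow> limit_cos w p t = cos_moment w p t"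
proof -
  have "AE t in lborel. t \<in> {0..T} \<longrightarrow> limit_cos w p t - cos_moment w p t = 0"
  proof (rule AE_Icc_eq_0_if_orthogonal)
    show "(\<lambda>t. limit_cos w p t - cos_moment w p t) \<in> borel_measurable (restrict_space lborel {0..T})"
      using limit_cos_measurable cos_moment_measurable by measurable
    show "\<bar>limit_cos w p t - cos_moment w p t\<bar> \<le> 2" if "t \<in> {0..T}" for t
      using abs_limit_cos_le_1[of w p t] abs_cos_moment_le_1[OF that, of w p] by linarith
    fix \<eta> :: "real \<Rightarrow> real" assume \<eta>: "continuous_on UNIV \<eta>" "bounded (range \<eta>)"
    obtain B where B: "\<And>t. \<bar>\<eta> t\<bar> \<le> B" using \<eta>(2) unfolding bounded_iff by auto
    have \<eta>_meas: "\<eta> \<in> borel_measurable (restrict_space lborel {0..T})"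
      by (rule borel_measurable_restrict_Icc_if_continuous_on[OF continuous_on_subset[OF \<eta>(1)]]) simp
    have "set_integrable lborel {0..T} (\<lambda>t. \<eta> t * limit_cos w p t)"
      using mult_mono[OF B abs_limit_cos_le_1 order_trans[OF abs_ge_zero B] abs_ge_zero]
        limit_cos_measurable[of w p] \<eta>_meas
      by (intro set_integrable_Icc_if_bounded[where B=B]) (auto simp: abs_mult)
    moreover have "set_integrable lborel {0..T} (\<lambda>t. \<eta> t * cos_moment w p t)"
      using mult_mono[OF B abs_cos_moment_le_1 order_trans[OF abs_ge_zero B] abs_ge_zero]
        cos_moment_measurable[of w p] \<eta>_meas
      by (intro set_integrable_Icc_if_bounded[where B=B]) (auto simp: abs_mult)
    moreover have "set_lebesgue_integral lborel {0..T} (\<lambda>t. \<eta> t * limit_cos w p t)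
        = set_lebesgue_integral lborel {0..T} (\<lambda>t. \<eta> t * cos_moment w p t)"
      using LIMSEQ_unique[OF set_integral_mult_emp_cos_tendsto_limit_cos[OF \<eta>] weak_limit_cos(2)[OF \<eta>]] .
    ultimately show "set_lebesgue_integral lborel {0..T} (\<lambda>t. \<eta> t * (limit_cos w p t - cos_moment w p t)) = 0"
      by (simp add: set_integral_diff(2)[symmetric] right_diff_distrib)
  qed
  then show ?thesis by simp
qed

lemma abs_limit_cos_diff_le:
  assumes "regular_time s" "regular_time t"
  shows "\<bar>limit_cos w p t - limit_cos w p s\<bar>
    \<le> rate_const w * \<bar>t - s\<bar> + cos_energy_const w * \<bar>limit_energy t - limit_energy s\<bar>"
proof -
  have le: "\<bar>limit_cos w p t - limit_cos w p s\<bar>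
      \<le> rate_const w * \<bar>t - s\<bar> + cos_energy_const w * \<bar>limit_energy t - limit_energy s\<bar>"
    if st: "regular_time s" "regular_time t" "s \<le> t" for s t
  proof (rule tendsto_le[OF _ _ tendsto_rabs[OF tendsto_diff[OF emp_cos_tendsto_limit_cos emp_cos_tendsto_limit_cos]]])
    show "(\<lambda>n. rate_const w * \<bar>t - s\<bar> + cos_energy_const w * (energy n s - energy n t))
        \<longlonglongrightarrow> rate_const w * \<bar>t - s\<bar> + cos_energy_const w * \<bar>limit_energy t - limit_energy s\<bar>"
    proof -
      have "\<bar>limit_energy t - limit_energy s\<bar> = limit_energy s - limit_energy t"
        using st limit_energy_antimono[of s t] unfolding regular_time_def by auto
      with st show ?thesis unfolding regular_time_def energy_conv_times_def
        by (simp only:) (intro tendsto_add tendsto_mult_left tendsto_diff tendsto_const; simp)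
    qed
    show "\<forall>\<^sub>F n in sequentially. \<bar>emp_cos w p n t - emp_cos w p n s\<bar>
        \<le> rate_const w * \<bar>t - s\<bar> + cos_energy_const w * (energy n s - energy n t)"
      using st emp_cos_increment_le[of s t] unfolding regular_time_def by auto
  qed (use st in auto)
  show ?thesis
    using le[OF assms] le[OF assms(2,1)] by (cases "s \<le> t") (auto simp: abs_minus_commute)
qed

definition transported_moment :: "real \<Rightarrow> ('a \<times> 'a \<Rightarrow> real) \<Rightarrow> real \<Rightarrow> real" where
  "transported_moment t0 f t = (\<integral>z. f (transport t0 t z) \<partial>\<mu> t)"

lemma integral_rho_phi_eq_transported_moment:
  assumes "t \<in> {0..T}" "continuous_on UNIV \<phi>" "\<And>y. 0 \<le> \<phi> y" "continuous_on UNIV \<xi>"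
  shows "(\<integral>y. \<xi> y \<partial>rho_phi \<mu> t0 t \<phi>) = transported_moment t0 (\<lambda>z. \<phi> (snd z) * \<xi> (fst z)) t"
  using integral_rho_phi[where \<mu>=\<mu>, OF sets_mu[OF assms(1)] assms(2-4)]
  by (simp add: transported_moment_def transport_def)

lemma integrable_transported:
  fixes f :: "'a \<times> 'a \<Rightarrow> real"
  assumes "t \<in> {0..T}" "continuous_on UNIV f" "AE z in \<mu> t. \<bar>f (transport t0 t z)\<bar> \<le> B"
  shows "integrable (\<mu> t) (\<lambda>z. f (transport t0 t z))"
proof -
  have "continuous_on UNIV (\<lambda>z. f (transport t0 t z))"
    by (rule continuous_on_compose2[OF assms(2) continuous_on_transport]) auto
  then show ?thesis using assms(3) by (rule integrable_mu_if_AE_bounded[OF assms(1)])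
qed

end

section \<open>Continuity along good times\<close>

locale approximative_solution_limit_good_times = approximative_solution_limit +
  fixes W :: "(('a \<times> 'a) \<times> real) set" and A :: "real set"
  assumes W_dense: "\<And>X. open X \<Longrightarrow> X \<noteq> {} \<Longrightarrow> \<exists>d\<in>W. d \<in> X"
    and A_subset: "A \<subseteq> {0..T}"
    and A_regular: "\<And>t. t \<in> A \<Longrightarrow> regular_time t"
    and A_support: "\<And>t. t \<in> A \<Longrightarrow> AE z in \<mu> t. norm z \<le> support_radius"
    and A_moments: "\<And>t w p. t \<in> A \<Longrightarrow> (w, p) \<in> W \<Longrightarrow> limit_cos w p t = cos_moment w p t"
begin

lemma transported_in_cball:
  assumes "t0 \<in> A" "t \<in> A"
  shows "AE z in \<mu> t. transport t0 t z \<in> cball 0 ((T + 1) * support_radius)"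
  using A_support[OF assms(2)]
proof eventually_elim
  case (elim z)
  have "t \<in> {0..T}" "t0 \<in> {0..T}" using assms A_subset by auto
  then have "\<bar>t - t0\<bar> \<le> T" by (auto simp: abs_le_iff)
  then have "(1 + \<bar>t - t0\<bar>) * norm z \<le> (T + 1) * support_radius"
    using elim by (intro mult_mono) auto
  then have "norm (transport t0 t z) \<le> (T + 1) * support_radius"
    using norm_transport_le[of t0 t z] by linarith
  then show ?case by simp
qed

lemma limit_energy_tendsto:
  assumes "t0 \<in> A" "\<And>n. ts n \<in> A" "ts \<longlonglongrightarrow> t0"
  shows "(\<lambda>n. limit_energy (ts n)) \<longlonglongrightarrow> limit_energy t0"
  using A_regular[OF assms(1)] A_regular[OF assms(2)] assms(3)
  unfolding regular_time_def continuous_within_sequentially by (auto simp: comp_def)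

lemma transported_cos_close_to_cos_moment:
  assumes "t0 \<in> A" "t \<in> A" "norm (w - w') \<le> \<rho>" "\<bar>p - p'\<bar> \<le> \<rho>"
  shows "\<bar>transported_moment t0 (\<lambda>z. cos (w \<bullet> z + p)) t - cos_moment w' p' t\<bar>
    \<le> norm w * \<bar>t - t0\<bar> * support_radius + \<rho> * (support_radius + 1)"
proof -
  have t: "t \<in> {0..T}" using assms(2) A_subset by auto
  have \<rho>: "0 \<le> \<rho>" using assms(3) norm_ge_zero order_trans by blast
  interpret prob_space "\<mu> t" using prob_space_mu_at[OF t] .
  have cont: "continuous_on UNIV (\<lambda>z. cos (w \<bullet> z + p))" "continuous_on UNIV (\<lambda>z. cos (w' \<bullet> z + p'))"
    by (intro continuous_intros)+
  have int: "integrable (\<mu> t) (\<lambda>z. cos (w \<bullet> transport t0 t z + p))"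
      "integrable (\<mu> t) (\<lambda>z. cos (w' \<bullet> z + p'))"
    by (rule integrable_transported[OF t cont(1) AE_I2, where B=1], simp)
       (rule integrable_mu_if_AE_bounded[OF t cont(2) AE_I2, where B=1], simp)
  have "AE z in \<mu> t. \<bar>cos (w \<bullet> transport t0 t z + p) - cos (w' \<bullet> z + p')\<bar>
      \<le> norm w * \<bar>t - t0\<bar> * support_radius + \<rho> * (support_radius + 1)"
    using A_support[OF assms(2)]
  proof eventually_elim
    case (elim z)
    have "\<bar>cos (w \<bullet> transport t0 t z + p) - cos (w' \<bullet> z + p')\<bar>
        \<le> \<bar>w \<bullet> transport t0 t z - w' \<bullet> z\<bar> + \<bar>p - p'\<bar>"
      using abs_cos_diff_le[of "w \<bullet> transport t0 t z + p" "w' \<bullet> z + p'"] by linarith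
    also have "\<dots> \<le> norm w * \<bar>t - t0\<bar> * norm z + norm (w - w') * norm z + \<rho>"
      using abs_inner_transport_diff_le[of w t0 t z w'] assms(4) by linarith
    also have "\<dots> \<le> norm w * \<bar>t - t0\<bar> * support_radius + \<rho> * support_radius + \<rho>"
      using elim assms(3) \<rho> by (intro add_mono mult_mono mult_left_mono) auto
    finally show ?case by (simp add: algebra_simps)
  qed
  then show ?thesis
    unfolding transported_moment_def cos_moment_def by (rule abs_integral_diff_le[OF int])
qed

lemma abs_transported_cos_diff_le:
  assumes t0: "t0 \<in> A" and t: "t \<in> A" and W: "(w', p') \<in> W"
    and close: "norm (w - w') \<le> \<rho>" "\<bar>p - p'\<bar> \<le> \<rho>"
  shows "\<bar>transported_moment t0 (\<lambda>z. cos (w \<bullet> z + p)) t - transported_moment t0 (\<lambda>z. cos (w \<bullet> z + p)) t0\<bar>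
    \<le> 2 * (\<rho> * (support_radius + 1)) + (norm w * support_radius + rate_const w') * \<bar>t - t0\<bar>
      + cos_energy_const w' * \<bar>limit_energy t - limit_energy t0\<bar>"
proof -
  \<comment> \<open>At the frequency \<open>(w', p') \<in> W\<close> the moments are limits of empirical averages,
    hence controlled by the energy.\<close>
  have "\<bar>cos_moment w' p' t - cos_moment w' p' t0\<bar>
      \<le> rate_const w' * \<bar>t - t0\<bar> + cos_energy_const w' * \<bar>limit_energy t - limit_energy t0\<bar>"
    using abs_limit_cos_diff_le[OF A_regular[OF t0] A_regular[OF t], of w' p']
      A_moments[OF t0 W] A_moments[OF t W] by simp
  moreover note transported_cos_close_to_cos_moment[OF t0 t close]
    transported_cos_close_to_cos_moment[OF t0 t0 close]
  ultimately show ?thesis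
    unfolding abs_le_iff by (simp add: algebra_simps)
qed

lemma transported_moment_cos_tendsto:
  assumes t0: "t0 \<in> A" and ts: "\<And>n. ts n \<in> A" "ts \<longlonglongrightarrow> t0"
  shows "(\<lambda>n. transported_moment t0 (\<lambda>z. cos (w \<bullet> z + p)) (ts n))
    \<longlonglongrightarrow> transported_moment t0 (\<lambda>z. cos (w \<bullet> z + p)) t0"
proof (rule LIMSEQ_if_small_majorants)
  fix \<epsilon> :: real assume "\<epsilon> > 0"
  define R where "R = support_radius"
  define \<rho> where "\<rho> = \<epsilon> / (4 * (R + 1))"
  have R: "0 \<le> R" by (simp add: R_def support_radius_nonneg)
  have "\<rho> * (R + 1) = \<epsilon> / 4" using R by (simp add: \<rho>_def field_simps)
  then have \<rho>: "\<rho> > 0" "2 * (\<rho> * (R + 1)) < \<epsilon>"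
    using \<open>\<epsilon> > 0\<close> R by (simp add: \<rho>_def, linarith)
  obtain w' p' where W: "(w', p') \<in> W" "dist (w', p') (w, p) < \<rho>"
    using W_dense[of "ball (w, p) \<rho>"] \<rho> by (auto simp: dist_commute)
  then have close: "norm (w - w') \<le> \<rho>" "\<bar>p - p'\<bar> \<le> \<rho>"
    using dist_fst_le[of "(w', p')" "(w, p)"] dist_snd_le[of "(w', p')" "(w, p)"]
    by (auto simp: dist_norm norm_minus_commute)
  define b where "b n = 2 * (\<rho> * (R + 1)) + (norm w * R + rate_const w') * \<bar>ts n - t0\<bar>
      + cos_energy_const w' * \<bar>limit_energy (ts n) - limit_energy t0\<bar>" for n
  have "b \<longlonglongrightarrow> 2 * (\<rho> * (R + 1))"
    unfolding b_def using ts limit_energy_tendsto[OF t0 ts]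
    by (intro tendsto_eq_intros LIM_zero) auto
  with \<rho>(2) abs_transported_cos_diff_le[OF t0 ts(1) W(1) close]
  show "\<exists>b \<beta>. b \<longlonglongrightarrow> \<beta> \<and> \<beta> < \<epsilon> \<and> (\<forall>\<^sub>F n in sequentially.
      dist (transported_moment t0 (\<lambda>z. cos (w \<bullet> z + p)) (ts n)) (transported_moment t0 (\<lambda>z. cos (w \<bullet> z + p)) t0)
        \<le> b n)"
    by (intro exI[of _ b] exI[of _ "2 * (\<rho> * (R + 1))"] conjI always_eventually allI)
       (simp_all add: b_def R_def dist_real_def)
qed

lemma integrable_transported_trig_poly:
  assumes "trig_poly f" "t \<in> A"
  shows "integrable (\<mu> t) (\<lambda>z. f (transport t0 t z))"
proof -
  obtain B where "\<And>z. \<bar>f z\<bar> \<le> B" using trig_poly_bounded[OF assms(1)] by blast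
  then show ?thesis
    using assms(2) A_subset by (intro integrable_transported[where B=B] trig_poly_continuous assms(1)) auto
qed

lemma transported_moment_trig_poly_tendsto:
  assumes "trig_poly f" and t0: "t0 \<in> A" and ts: "\<And>n. ts n \<in> A" "ts \<longlonglongrightarrow> t0"
  shows "(\<lambda>n. transported_moment t0 f (ts n)) \<longlonglongrightarrow> transported_moment t0 f t0"
  using assms(1)
proof (induction rule: trig_poly.induct)
  case (cos w p)
  show ?case by (rule transported_moment_cos_tendsto[OF t0 ts])
next
  case (add f g)
  have "transported_moment t0 (\<lambda>z. f z + g z) t = transported_moment t0 f t + transported_moment t0 g t"
    if "t \<in> A" for t
    unfolding transported_moment_def
    by (intro Bochner_Integration.integral_add integrable_transported_trig_poly add.hyps that)
  then show ?case using tendsto_add[OF add.IH] t0 ts(1) by simp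
next
  case (scale f c)
  then show ?case using tendsto_mult_left[OF scale.IH, of c] by (simp add: transported_moment_def)
qed

lemma abs_transported_moment_diff_le:
  assumes H: "continuous_on UNIV H" and h: "trig_poly h"
    and close: "\<And>z. z \<in> cball 0 ((T + 1) * support_radius) \<Longrightarrow> \<bar>H z - h z\<bar> \<le> \<delta>"
    and t0: "t0 \<in> A" and t: "t \<in> A"
  shows "\<bar>transported_moment t0 H t - transported_moment t0 h t\<bar> \<le> \<delta>"
proof -
  define K where "K = cball (0 :: 'a \<times> 'a) ((T + 1) * support_radius)"
  have "bounded (H ` K)"
    unfolding K_def by (intro compact_imp_bounded compact_continuous_image continuous_on_subset[OF H]) auto
  then obtain B where "\<forall>y\<in>H ` K. norm y \<le> B" unfolding bounded_iff by blast
  then have B: "\<And>z. z \<in> K \<Longrightarrow> \<bar>H z\<bar> \<le> B" by (metis image_eqI real_norm_def)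
  have "t \<in> {0..T}" using t A_subset by auto
  interpret prob_space "\<mu> t" using prob_space_mu_at[OF \<open>t \<in> {0..T}\<close>] .
  have in_K: "AE z in \<mu> t. transport t0 t z \<in> K"
    using transported_in_cball[OF t0 t] by (simp add: K_def)
  have "AE z in \<mu> t. \<bar>H (transport t0 t z)\<bar> \<le> B"
    using in_K by (rule eventually_mono) (rule B)
  then have "integrable (\<mu> t) (\<lambda>z. H (transport t0 t z))"
    by (rule integrable_transported[OF \<open>t \<in> {0..T}\<close> H])
  moreover have "AE z in \<mu> t. \<bar>H (transport t0 t z) - h (transport t0 t z)\<bar> \<le> \<delta>"
    using in_K by (rule eventually_mono) (simp add: K_def close)
  ultimately show ?thesis
    unfolding transported_moment_def
    by (rule abs_integral_diff_le[OF _ integrable_transported_trig_poly[OF h t]])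
qed

lemma transported_moment_continuous_tendsto:
  assumes H: "continuous_on UNIV H" and t0: "t0 \<in> A" and ts: "\<And>n. ts n \<in> A" "ts \<longlonglongrightarrow> t0"
  shows "(\<lambda>n. transported_moment t0 H (ts n)) \<longlonglongrightarrow> transported_moment t0 H t0"
proof (rule LIMSEQ_if_small_majorants)
  fix \<epsilon> :: real assume "\<epsilon> > 0"
  obtain h where h: "trig_poly h" "\<And>z. z \<in> cball 0 ((T + 1) * support_radius) \<Longrightarrow> \<bar>H z - h z\<bar> < \<epsilon> / 4"
    using trig_poly_uniform_approx[of "cball 0 ((T + 1) * support_radius)" H "\<epsilon> / 4"]
      continuous_on_subset[OF H] \<open>\<epsilon> > 0\<close> by auto
  have approx: "\<bar>transported_moment t0 H t - transported_moment t0 h t\<bar> \<le> \<epsilon> / 4" if "t \<in> A" for t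
    using h by (intro abs_transported_moment_diff_le[OF H h(1) _ t0 that] less_imp_le) auto
  define b where "b n = \<epsilon> / 2 + dist (transported_moment t0 h (ts n)) (transported_moment t0 h t0)" for n
  have "dist (transported_moment t0 H (ts n)) (transported_moment t0 H t0) \<le> b n" for n
    using approx[OF ts(1)[of n]] approx[OF t0] unfolding b_def dist_real_def by linarith
  moreover have "b \<longlonglongrightarrow> \<epsilon> / 2 + dist (transported_moment t0 h t0) (transported_moment t0 h t0)"
    unfolding b_def
    by (intro tendsto_add tendsto_const tendsto_dist transported_moment_trig_poly_tendsto[OF h(1) t0 ts])
  ultimately show "\<exists>b \<beta>. b \<longlonglongrightarrow> \<beta> \<and> \<beta> < \<epsilon> \<and>
      (\<forall>\<^sub>F n in sequentially. dist (transported_moment t0 H (ts n)) (transported_moment t0 H t0) \<le> b n)"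
    using \<open>\<epsilon> > 0\<close> by (intro exI[of _ b] exI[of _ "\<epsilon> / 2"] conjI always_eventually allI) simp_all
qed

end

context approximative_solution_limit
begin

lemma good_times_exist:
  obtains W A where "approximative_solution_limit_good_times \<alpha> T M N x v \<mu> W A"
    "{0..T} - A \<in> null_sets lborel"
proof -
  obtain W :: "(('a \<times> 'a) \<times> real) set"
    where W: "countable W" "\<And>X. open X \<Longrightarrow> X \<noteq> {} \<Longrightarrow> \<exists>d\<in>W. d \<in> X"
    using countable_dense_exists by blast
  have "AE t in lborel. \<forall>y\<in>W. t \<in> {0..T} \<longrightarrow> limit_cos (fst y) (snd y) t = cos_moment (fst y) (snd y) t"
    using limit_cos_eq_cos_moment_AE by (subst AE_ball_countable[OF W(1)]) blast
  with AE_regular_time support_AE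
  have "AE t in lborel. t \<in> {0..T} \<longrightarrow> regular_time t \<and> (AE z in \<mu> t. norm z \<le> support_radius)
      \<and> (\<forall>y\<in>W. limit_cos (fst y) (snd y) t = cos_moment (fst y) (snd y) t)"
    by eventually_elim blast
  from AE_imp_conull_subset[OF this] obtain A where A: "A \<subseteq> {0..T}" "{0..T} - A \<in> null_sets lborel"
    and good: "\<forall>t\<in>A. regular_time t \<and> (AE z in \<mu> t. norm z \<le> support_radius)
      \<and> (\<forall>y\<in>W. limit_cos (fst y) (snd y) t = cos_moment (fst y) (snd y) t)"
    by auto
  have "approximative_solution_limit_good_times \<alpha> T M N x v \<mu> W A"
  proof unfold_locales
    show "A \<subseteq> {0..T}" by (fact A(1))
    show "\<exists>d\<in>W. d \<in> X" if "open X" "X \<noteq> {}" for X using W(2) that .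
    fix t assume t: "t \<in> A"
    show "regular_time t" "AE z in \<mu> t. norm z \<le> support_radius" using bspec[OF good t] by simp_all
    show "limit_cos w p t = cos_moment w p t" if "(w, p) \<in> W" for w p
      using bspec[OF conjunct2[OF conjunct2[OF bspec[OF good t]]] that] by simp
  qed
  then show ?thesis using A(2) by (rule that)
qed

theorem steadily_flowing: "steadily_flowing T \<mu>"
proof -
  obtain W A where good: "approximative_solution_limit_good_times \<alpha> T M N x v \<mu> W A"
    and null: "{0..T} - A \<in> null_sets lborel"
    by (rule good_times_exist)
  interpret good_times: approximative_solution_limit_good_times \<alpha> T M N x v \<mu> W A by (fact good)
  show ?thesis unfolding steadily_flowing_def
  proof (intro exI[of _ A] conjI good_times.A_subset null ballI allI impI)
    fix t0 ts and \<phi> \<xi> :: "'a \<Rightarrow> real"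
    assume t0: "t0 \<in> A" and \<phi>: "test_function \<phi> \<and> (\<forall>y. 0 \<le> \<phi> y)"
      and ts: "(\<forall>n. ts n \<in> A) \<and> ts \<longlonglongrightarrow> t0" and \<xi>: "continuous_on UNIV \<xi> \<and> bounded (range \<xi>)"
    have \<phi>_cont: "continuous_on UNIV \<phi>" using \<phi> test_function_continuous by blast
    have \<xi>_cont: "continuous_on UNIV \<xi>" using \<xi> by blast
    have "continuous_on UNIV (\<lambda>z. \<phi> (snd z) * \<xi> (fst z))"
      by (intro continuous_on_mult continuous_on_compose2[OF \<phi>_cont] continuous_on_compose2[OF \<xi>_cont]
          continuous_intros) auto
    then have "(\<lambda>n. transported_moment t0 (\<lambda>z. \<phi> (snd z) * \<xi> (fst z)) (ts n))
        \<longlonglongrightarrow> transported_moment t0 (\<lambda>z. \<phi> (snd z) * \<xi> (fst z)) t0"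
      using ts by (intro good_times.transported_moment_continuous_tendsto t0) auto
    moreover have "(\<integral>y. \<xi> y \<partial>rho_phi \<mu> t0 t \<phi>) = transported_moment t0 (\<lambda>z. \<phi> (snd z) * \<xi> (fst z)) t"
      if "t \<in> A" for t
      using that good_times.A_subset \<phi> by (intro integral_rho_phi_eq_transported_moment \<phi>_cont \<xi>_cont) auto
    ultimately show "(\<lambda>n. \<integral>y. \<xi> y \<partial>rho_phi \<mu> t0 (ts n) \<phi>) \<longlonglongrightarrow> (\<integral>y. \<xi> y \<partial>rho_phi \<mu> t0 t0 \<phi>)"
      using ts t0 by simp
  qed
qed
end

theorem mainTheorem11:
  fixes \<alpha> T M :: real
    and \<rho>0 :: "'a::euclidean_space measure" and u0 :: "'a \<Rightarrow> 'a"
    and N :: "nat \<Rightarrow> nat" and x v :: "nat \<Rightarrow> nat \<Rightarrow> real \<Rightarrow> 'a"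
    and \<mu> :: "real \<Rightarrow> ('a \<times> 'a) measure" and \<rho> :: "real \<Rightarrow> 'a measure"
  assumes "T > 0" and "1 \<le> \<alpha>" and "\<alpha> \<le> 2"
    and "prob_space \<rho>0" and "sets \<rho>0 = sets borel"
    and "\<exists>K. compact K \<and> emeasure \<rho>0 (UNIV - K) = 0"
    and "u0 \<in> borel_measurable \<rho>0" and "\<exists>C. AE y in \<rho>0. norm (u0 y) \<le> C"
    and "strict_mono N" and "\<forall>n. 0 < N n"
    and "\<forall>n. particle_solution \<alpha> T (N n) (x n) (v n)"
    and "\<forall>g :: 'a \<Rightarrow> real. continuous_on UNIV g \<and> bounded (range g) \<longrightarrow>
           (\<lambda>n. (\<Sum>i<N n. g (x n i 0)) / real (N n)) \<longlonglongrightarrow> (\<integral>y. g y \<partial>\<rho>0)"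
    and "\<forall>g :: 'a \<Rightarrow> real. continuous_on UNIV g \<and> bounded (range g) \<longrightarrow>
           (\<lambda>n. (1 / real (N n)) *\<^sub>R (\<Sum>i<N n. g (x n i 0) *\<^sub>R v n i 0))
             \<longlonglongrightarrow> (\<integral>y. g y *\<^sub>R u0 y \<partial>\<rho>0)"
    and "\<forall>n i t. i < N n \<and> t \<in> {0..T} \<longrightarrow>
           x n i t \<in> ball 0 ((T + 1) * M) \<and> v n i t \<in> ball 0 M"
    and "\<forall>t\<in>{0..T}. prob_space (\<mu> t) \<and> sets (\<mu> t) = sets borel"
    and "\<forall>g :: real \<times> ('a \<times> 'a) \<Rightarrow> real.
           continuous_on ({0..T} \<times> UNIV) g \<and> bounded (g ` ({0..T} \<times> UNIV)) \<longrightarrow>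
             (\<lambda>t. \<integral>z. g (t, z) \<partial>\<mu> t) \<in> borel_measurable (restrict_space lborel {0..T}) \<and>
             (\<lambda>n. set_lebesgue_integral lborel {0..T}
                    (\<lambda>t. (\<Sum>i<N n. g (t, (x n i t, v n i t))) / real (N n)))
               \<longlonglongrightarrow> set_lebesgue_integral lborel {0..T} (\<lambda>t. \<integral>z. g (t, z) \<partial>\<mu> t)"
    and "\<forall>G :: real \<times> (('a \<times> 'a) \<times> ('a \<times> 'a)) \<Rightarrow> real.
           continuous_on ({0..T} \<times> UNIV) G \<and> bounded (G ` ({0..T} \<times> UNIV)) \<longrightarrow>
             (\<lambda>t. \<integral>w. G (t, w) \<partial>(\<mu> t \<Otimes>\<^sub>M \<mu> t)) \<in> borel_measurable (restrict_space lborel {0..T}) \<and>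
             (\<lambda>n. set_lebesgue_integral lborel {0..T}
                    (\<lambda>t. (\<Sum>i<N n. \<Sum>j<N n. G (t, ((x n i t, v n i t), (x n j t, v n j t))))
                          / (real (N n))\<^sup>2))
               \<longlonglongrightarrow> set_lebesgue_integral lborel {0..T} (\<lambda>t. \<integral>w. G (t, w) \<partial>(\<mu> t \<Otimes>\<^sub>M \<mu> t))"
    and "\<forall>t\<in>{0..T}. finite_measure (\<rho> t) \<and> sets (\<rho> t) = sets borel"
    and "\<forall>\<epsilon>>0. \<exists>K. \<forall>n\<ge>K. \<forall>t\<in>{0..T}. \<forall>f :: 'a \<Rightarrow> real. bl_test f \<longrightarrow>
           \<bar>(\<Sum>i<N n. f (x n i t)) / real (N n) - (\<integral>y. f y \<partial>\<rho> t)\<bar> \<le> \<epsilon>"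
    and "AE t in lborel. t \<in> {0..T} \<longrightarrow>
           (\<lambda>n. (\<Sum>i<N n. (norm (v n i t))\<^sup>2) / real (N n)) \<longlonglongrightarrow> (\<integral>z. (norm (snd z))\<^sup>2 \<partial>\<mu> t)"
  shows "steadily_flowing T \<mu>"
proof -
  interpret approximative_solution_limit \<alpha> T M N x v \<mu>
    using assms(1-3,10,11,14-16,20) by unfold_locales
  show ?thesis by (rule steadily_flowing)
qed

end
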